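(* Let $K$ be a precubical set. The identity map of $|K|_{geom}$ induces a map of multipointed $d$-spaces $|K|^t\to|K|$ from the tame realization of $K$ to the realization of $K$, and this map induces an isomorphism of directed spaces $\vec{\mathrm{Sp}}(|K|^t)\cong\vec{\mathrm{Sp}}(|K|)$.
   Context: $\mathbf{Top}$ is the category of $\Delta$-generated spaces (or $\Delta$-Hausdorff $\Delta$-generated spaces). $\mathcal{M}(\ell,\ell')$: non-decreasing surjective continuous maps $[0,\ell]\to[0,\ell']$; $\mathcal{I}(\ell)$: non-decreasing continuous maps $[0,1]\to[0,\ell]$; $\mu_\ell(t)=t/\ell$. Moore composition $\gamma_1*\gamma_2$ of paths $[0,\ell_1]\to U$, $[0,\ell_2]\to U$ is the concatenated path of length $\ell_1+\ell_2$; normalized composition of $\gamma_1,\gamma_2:[0,1]\to U$ is $(\gamma_1\mu_{1/2})*(\gamma_2\mu_{1/2})$. A multipointed $d$-space $X=(|X|,X^0,\mathbb{P}^{\mathrm{top}}X)$ is a space, a subset of states and a set of continuous maps $[0,1]\to|X|$ (execution paths) with endpoints in $X^0$, closed under precomposition by $\mathcal{M}(1,1)$ and under normalized composition; maps preserve states and execution paths. This category is cocomplete. A directed space is $(|Y|,d(Y))$ with $d(Y)$ a set of paths $[0,1]\to|Y|$ containing constants, closed under normalized composition and precomposition by $\mathcal{I}(1)$. $\vec{\mathrm{Sp}}(X)$ is the directed space $(|X|,d(X))$ where $d(X)$ consists of constant paths and Moore compositions $(\gamma_1\phi_1\mu_{\ell_1})*\dots*(\gamma_n\phi_n\mu_{\ell_n})$,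 $n\ge1$, $\ell_i>0$, $\sum\ell_i=1$, $\gamma_i$ execution paths, $\phi_i\in\mathcal{I}(1)$. Precubical sets: let $[n]=\{0,1\}^n$ ($[0]=\{()\}$), $\delta_i^\alpha(\epsilon_1,\dots,\epsilon_{n-1})=(\epsilon_1,\dots,\epsilon_{i-1},\alpha,\epsilon_i,\dots,\epsilon_{n-1})$ for $1\le i\le n$, $\alpha\in\{0,1\}$; $\square$ is the subcategory of sets with objects $[n]$, $n\ge0$, generated by the $\delta_i^\alpha$. A precubical set is a presheaf $K$ on $\square$, $K_n=K([n])$. Since $[n]\mapsto[0,1]^n$ (with the same formulas for $\delta_i^\alpha$) is a functor $\square\to\mathbf{Top}$, set $|K|_{geom}=\int^{[n]}K_n\cdot[0,1]^n$; for $c\in K_n$ let $|c|_{geom}:[0,1]^n\to|K|_{geom}$ be the corresponding map. A directed path of $[0,1]^n$ is a continuous path non-decreasing in each coordinate; it is tame if its endpoints lie in $\{0,1\}^n$. A directed path of $|K|_{geom}$ is a Moore composition $(|c_1|_{geom}\gamma_1)*\dots*(|c_p|_{geom}\gamma_p)$, $p\ge1$, with each $\gamma_i$ a directed path of $[0,1]^{\dim c_i}$. For $n\ge1$, $|\square[n]|^t$ is the multipointed $d$-space with underlying space $[0,1]^n$, states $\{0,1\}^n$, and, for states $\underline a<\underline b$ (coordinatewise, $\underline a\neq\underline b$), execution paths from $\underline a$ to $\underline b$ all directed paths $[0,1]\to[0,1]^n$ from $\underline a$ to $\underline b$, and no execution paths from $\underline a$ to $\underline b$ otherwise; $|\square[0]|^t$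 is the point. This gives a functor $\square\to$ multipointed $d$-spaces, and the tame realization is $|K|^t=\int^{[n]\in\square}K_n\cdot|\square[n]|^t$ (underlying space $|K|_{geom}$). The realization $|K|$ is the multipointed $d$-space with underlying space $|K|_{geom}$, set of states $K_0$, and whose execution paths from $\alpha$ to $\beta$ are the non-constant directed paths $[0,1]\to|K|_{geom}$ from $\alpha$ to $\beta$. *)

theory Defs
  imports "HOL-Analysis.Analysis"
begin

text \<open>Paths [0,1] -> U are functions real => 'b that are undefined outside [0,1]
  (extensional), so that sets of paths are compared extensionally on [0,1].\<close>

definition unit_path :: "(real \<Rightarrow> 'b) \<Rightarrow> real \<Rightarrow> 'b" where
  "unit_path f = restrict f {0..1}"

definition I1 :: "(real \<Rightarrow> real) set" where
  "I1 = {\<phi>. continuous_on {0..1} \<phi> \<and> mono_on {0..1} \<phi> \<and> \<phi> ` {0..1} \<subseteq> {0..1}}"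

definition M11 :: "(real \<Rightarrow> real) set" where
  "M11 = {\<phi>. continuous_on {0..1} \<phi> \<and> mono_on {0..1} \<phi> \<and> \<phi> ` {0..1} = {0..1}}"

definition normcomp :: "(real \<Rightarrow> 'b) \<Rightarrow> (real \<Rightarrow> 'b) \<Rightarrow> real \<Rightarrow> 'b" where
  "normcomp g1 g2 = unit_path (\<lambda>t. if t \<le> 1/2 then g1 (2*t) else g2 (2*t - 1))"

text \<open>Moore composition of a list of Moore paths (l_i, f_i), f_i : [0,l_i] -> U\<close>
fun moore :: "(real \<times> (real \<Rightarrow> 'b)) list \<Rightarrow> real \<Rightarrow> 'b" where
  "moore [] t = undefined"
| "moore [(l, f)] t = f t"
| "moore ((l, f) # p # ps) t = (if t \<le> l then f t else moore (p # ps) (t - l))"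

definition composable :: "(real \<times> (real \<Rightarrow> 'b)) list \<Rightarrow> bool" where
  "composable ps \<longleftrightarrow> (\<forall>i. Suc i < length ps \<longrightarrow> snd (ps!i) (fst (ps!i)) = snd (ps!Suc i) 0)"

record 'b mpds =
  mspace :: "'b topology"
  mstates :: "'b set"
  mpaths :: "(real \<Rightarrow> 'b) set"

definition is_mpds :: "'b mpds \<Rightarrow> bool" where
  "is_mpds X \<longleftrightarrow>
     mstates X \<subseteq> topspace (mspace X) \<and>
     (\<forall>\<gamma>\<in>mpaths X. \<gamma> \<in> extensional {0..1} \<and>
        continuous_map (top_of_set {0..1}) (mspace X) \<gamma> \<and>
        \<gamma> 0 \<in> mstates X \<and> \<gamma> 1 \<in> mstates X) \<and>
     (\<forall>\<gamma>\<in>mpaths X. \<forall>\<phi>\<in>M11. unit_path (\<gamma> \<circ> \<phi>) \<in> mpaths X) \<and>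
     (\<forall>\<gamma>1\<in>mpaths X. \<forall>\<gamma>2\<in>mpaths X. \<gamma>1 1 = \<gamma>2 0 \<longrightarrow> normcomp \<gamma>1 \<gamma>2 \<in> mpaths X)"

definition mpds_map :: "'b mpds \<Rightarrow> 'c mpds \<Rightarrow> ('b \<Rightarrow> 'c) \<Rightarrow> bool" where
  "mpds_map X Y f \<longleftrightarrow> is_mpds X \<and> is_mpds Y \<and>
     continuous_map (mspace X) (mspace Y) f \<and>
     f ` mstates X \<subseteq> mstates Y \<and>
     (\<forall>\<gamma>\<in>mpaths X. unit_path (f \<circ> \<gamma>) \<in> mpaths Y)"

record 'b dspace =
  dtop :: "'b topology"
  dpaths :: "(real \<Rightarrow> 'b) set"

definition is_dspace :: "'b dspace \<Rightarrow> bool" where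
  "is_dspace Y \<longleftrightarrow>
     (\<forall>\<gamma>\<in>dpaths Y. \<gamma> \<in> extensional {0..1} \<and>
        continuous_map (top_of_set {0..1}) (dtop Y) \<gamma>) \<and>
     (\<forall>x\<in>topspace (dtop Y). unit_path (\<lambda>_. x) \<in> dpaths Y) \<and>
     (\<forall>\<gamma>1\<in>dpaths Y. \<forall>\<gamma>2\<in>dpaths Y. \<gamma>1 1 = \<gamma>2 0 \<longrightarrow> normcomp \<gamma>1 \<gamma>2 \<in> dpaths Y) \<and>
     (\<forall>\<gamma>\<in>dpaths Y. \<forall>\<phi>\<in>I1. unit_path (\<gamma> \<circ> \<phi>) \<in> dpaths Y)"

definition dspace_iso :: "'b dspace \<Rightarrow> 'c dspace \<Rightarrow> ('b \<Rightarrow> 'c) \<Rightarrow> bool" where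
  "dspace_iso A B f \<longleftrightarrow> is_dspace A \<and> is_dspace B \<and>
     (\<exists>g. homeomorphic_maps (dtop A) (dtop B) f g \<and>
          (\<forall>\<gamma>\<in>dpaths A. unit_path (f \<circ> \<gamma>) \<in> dpaths B) \<and>
          (\<forall>\<gamma>\<in>dpaths B. unit_path (g \<circ> \<gamma>) \<in> dpaths A))"

definition Sp :: "'b mpds \<Rightarrow> 'b dspace" where
  "Sp X = \<lparr> dtop = mspace X,
     dpaths = {unit_path (\<lambda>_. x) | x. x \<in> topspace (mspace X)} \<union>
       {unit_path (moore ps) | ps. ps \<noteq> [] \<and> composable ps \<and>
          sum_list (map fst ps) = 1 \<and>
          (\<forall>(l, f)\<in>set ps. l > 0 \<and>
             (\<exists>\<gamma>\<in>mpaths X. \<exists>\<phi>\<in>I1. \<forall>t\<in>{0..l}. f t = \<gamma> (\<phi> (t / l))))} \<rparr>"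

text \<open>Points of [0,1]^n are represented as functions nat => real vanishing from index n on
  (coordinates 0..n-1); the topology is the product topology.\<close>

definition cube :: "nat \<Rightarrow> (nat \<Rightarrow> real) set" where
  "cube n = {x. (\<forall>i<n. 0 \<le> x i \<and> x i \<le> 1) \<and> (\<forall>i\<ge>n. x i = 0)}"

definition verts :: "nat \<Rightarrow> (nat \<Rightarrow> real) set" where
  "verts n = {x \<in> cube n. \<forall>i<n. x i = 0 \<or> x i = 1}"

text \<open>delta_i^alpha (1 <= i <= n) : inserts alpha at position i\<close>
definition delta :: "nat \<Rightarrow> bool \<Rightarrow> (nat \<Rightarrow> real) \<Rightarrow> (nat \<Rightarrow> real)" where
  "delta i a x = (\<lambda>k. if Suc k < i then x k else if Suc k = i then (if a then 1 else 0) else x (k - 1))"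

text \<open>A word (i_1,a_1)...(i_k,a_k) denotes delta_{i_1}^{a_1} o ... o delta_{i_k}^{a_k} : [m] -> [m+k]\<close>
fun apply_word :: "(nat \<times> bool) list \<Rightarrow> (nat \<Rightarrow> real) \<Rightarrow> (nat \<Rightarrow> real)" where
  "apply_word [] x = x"
| "apply_word ((i, a) # w) x = delta i a (apply_word w x)"

fun valid_word :: "nat \<Rightarrow> (nat \<times> bool) list \<Rightarrow> bool" where
  "valid_word m [] = True"
| "valid_word m ((i, a) # w) = (valid_word m w \<and> 1 \<le> i \<and> i \<le> m + length w + 1)"

text \<open>A presheaf on the box category, given by its cells K_n and the action
  face n i a = K(delta_i^a) : K_n -> K_(n-1) of the generators.\<close>
record 'a precub =
  cells :: "nat \<Rightarrow> 'a set"
  face :: "nat \<Rightarrow> nat \<Rightarrow> bool \<Rightarrow> 'a \<Rightarrow> 'a"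

text \<open>K(f) : K_(m+length w) -> K_m for the morphism f denoted by the word w\<close>
fun face_word :: "'a precub \<Rightarrow> nat \<Rightarrow> (nat \<times> bool) list \<Rightarrow> 'a \<Rightarrow> 'a" where
  "face_word K m [] c = c"
| "face_word K m ((i, a) # w) c = face_word K m w (face K (m + length w + 1) i a c)"

text \<open>K is a presheaf on the box category: the generators act between the right sets,
  and the action is well defined on morphisms, i.e. two words denoting the same map of
  sets [m] -> [n] act in the same way (functoriality then holds by construction).\<close>
definition precubical :: "'a precub \<Rightarrow> bool" where
  "precubical K \<longleftrightarrow>
     (\<forall>n c i a. c \<in> cells K n \<and> 1 \<le> i \<and> i \<le> n \<longrightarrow> face K n i a c \<in> cells K (n - 1)) \<and>
     (\<forall>m w w'. valid_word m w \<and> valid_word m w' \<and> length w = length w' \<and>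
        (\<forall>x\<in>verts m. apply_word w x = apply_word w' x) \<longrightarrow>
        (\<forall>c\<in>cells K (m + length w). face_word K m w c = face_word K m w' c))"

type_synonym 'a gpt = "(nat \<times> 'a \<times> (nat \<Rightarrow> real)) set"

definition geo_pts :: "'a precub \<Rightarrow> (nat \<times> 'a \<times> (nat \<Rightarrow> real)) set" where
  "geo_pts K = {(n, c, x). c \<in> cells K n \<and> x \<in> cube n}"

text \<open>coend relation: (m, K(f) c, x) ~ (n, c, f x)\<close>
definition geo_rel :: "'a precub \<Rightarrow> (nat \<times> 'a \<times> (nat \<Rightarrow> real)) \<Rightarrow> (nat \<times> 'a \<times> (nat \<Rightarrow> real)) \<Rightarrow> bool" where
  "geo_rel K p q \<longleftrightarrow> (\<exists>m w c x. valid_word m w \<and> c \<in> cells K (m + length w) \<and> x \<in> cube m \<and>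
      p = (m, face_word K m w c, x) \<and> q = (m + length w, c, apply_word w x))"

definition geo_cls :: "'a precub \<Rightarrow> (nat \<times> 'a \<times> (nat \<Rightarrow> real)) \<Rightarrow> 'a gpt" where
  "geo_cls K p = {q \<in> geo_pts K. equivclp (geo_rel K) p q}"

definition geo_carrier :: "'a precub \<Rightarrow> 'a gpt set" where
  "geo_carrier K = geo_cls K ` geo_pts K"

definition cell_map :: "'a precub \<Rightarrow> nat \<Rightarrow> 'a \<Rightarrow> (nat \<Rightarrow> real) \<Rightarrow> 'a gpt" where
  "cell_map K n c x = geo_cls K (n, c, x)"

text \<open>final topology with respect to the maps |c|_geom (the coend in spaces)\<close>
definition geo_top :: "'a precub \<Rightarrow> 'a gpt topology" where
  "geo_top K = topology (\<lambda>U. U \<subseteq> geo_carrier K \<and>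
     (\<forall>n c. c \<in> cells K n \<longrightarrow>
        openin (top_of_set (cube n)) {x \<in> cube n. cell_map K n c x \<in> U}))"

definition dir_cube_path :: "nat \<Rightarrow> real \<Rightarrow> (real \<Rightarrow> (nat \<Rightarrow> real)) \<Rightarrow> bool" where
  "dir_cube_path n l \<gamma> \<longleftrightarrow> continuous_on {0..l} \<gamma> \<and> \<gamma> ` {0..l} \<subseteq> cube n \<and>
     (\<forall>i. mono_on {0..l} (\<lambda>t. \<gamma> t i))"

definition geo_dipaths :: "'a precub \<Rightarrow> (real \<Rightarrow> 'a gpt) set" where
  "geo_dipaths K = {unit_path (moore ps) | ps. ps \<noteq> [] \<and> composable ps \<and>
      sum_list (map fst ps) = 1 \<and>
      (\<forall>(l, f)\<in>set ps. l > 0 \<and> (\<exists>n c \<gamma>. c \<in> cells K n \<and> dir_cube_path n l \<gamma> \<and>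
          (\<forall>t\<in>{0..l}. f t = cell_map K n c (\<gamma> t))))}"

text \<open>|square[n]|^t (for n = 0 this is the point, without execution paths)\<close>
definition cube_mpds :: "nat \<Rightarrow> (nat \<Rightarrow> real) mpds" where
  "cube_mpds n = \<lparr> mspace = top_of_set (cube n), mstates = verts n,
     mpaths = {\<gamma>. \<gamma> \<in> extensional {0..1} \<and> dir_cube_path n 1 \<gamma> \<and>
        (\<exists>a\<in>verts n. \<exists>b\<in>verts n. (\<forall>i. a i \<le> b i) \<and> a \<noteq> b \<and> \<gamma> 0 = a \<and> \<gamma> 1 = b)} \<rparr>"

inductive_set tame_paths :: "'a precub \<Rightarrow> (real \<Rightarrow> 'a gpt) set" for K where
  base: "c \<in> cells K n \<Longrightarrow> \<gamma> \<in> mpaths (cube_mpds n) \<Longrightarrow>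
           unit_path (cell_map K n c \<circ> \<gamma>) \<in> tame_paths K"
| reparam: "\<gamma> \<in> tame_paths K \<Longrightarrow> \<phi> \<in> M11 \<Longrightarrow> unit_path (\<gamma> \<circ> \<phi>) \<in> tame_paths K"
| comp: "\<gamma>1 \<in> tame_paths K \<Longrightarrow> \<gamma>2 \<in> tame_paths K \<Longrightarrow> \<gamma>1 1 = \<gamma>2 0 \<Longrightarrow>
           normcomp \<gamma>1 \<gamma>2 \<in> tame_paths K"

definition tame_real :: "'a precub \<Rightarrow> 'a gpt mpds" where
  "tame_real K = \<lparr> mspace = geo_top K,
     mstates = {cell_map K n c v | n c v. c \<in> cells K n \<and> v \<in> verts n},
     mpaths = tame_paths K \<rparr>"

definition realization :: "'a precub \<Rightarrow> 'a gpt mpds" where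
  "realization K = \<lparr> mspace = geo_top K,
     mstates = {cell_map K 0 v (\<lambda>_. 0) | v. v \<in> cells K 0},
     mpaths = {\<gamma> \<in> geo_dipaths K.
        \<gamma> 0 \<in> {cell_map K 0 v (\<lambda>_. 0) | v. v \<in> cells K 0} \<and>
        \<gamma> 1 \<in> {cell_map K 0 v (\<lambda>_. 0) | v. v \<in> cells K 0} \<and>
        \<not> (\<forall>t\<in>{0..1}. \<gamma> t = \<gamma> 0)} \<rparr>"

end

theory Submission
  imports Defs
begin

text \<open>Both directed spaces live on \<open>|K|_geom\<close>, so the claim is that the Moore compositions
  of reparametrized execution paths of \<open>|K|\<^sup>t\<close> and of \<open>|K|\<close> are the same paths.
  A tame execution path is a directed path between vertices, and it is not constant because it
  passes through a point with a coordinate in \<open>(0,1)\<close>; such points are never identified with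
  vertices by the coend relation. Conversely, a directed path of \<open>|K|_geom\<close> is a Moore
  composition of directed paths \<open>\<rho>\<close> in cubes. In a cube of positive dimension \<open>\<rho>\<close> is the middle
  third of the tame execution path that runs linearly from the vertex \<open>0\<close> to the start of \<open>\<rho>\<close>,
  then through \<open>\<rho>\<close>, and linearly on to the vertex \<open>(1,\<dots>,1)\<close>. Pieces in \<open>0\<close>-cubes are
  constant and are absorbed into a neighbouring piece, which exists because execution paths
  of \<open>|K|\<close> are not constant.
  Since reparametrizations and concatenations of Moore compositions are again Moore
  compositions, the two sets of directed paths agree.\<close>

section \<open>Moore compositions\<close>

definition moore_chain ::
    "(real \<Rightarrow> (real \<Rightarrow> 'b) \<Rightarrow> bool) \<Rightarrow> (real \<times> (real \<Rightarrow> 'b)) list \<Rightarrow> bool" where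
  "moore_chain P ps \<longleftrightarrow> ps \<noteq> [] \<and> composable ps \<and> (\<forall>(l, f)\<in>set ps. l > 0 \<and> P l f)"

abbreviation chain_length :: "(real \<times> (real \<Rightarrow> 'b)) list \<Rightarrow> real" where
  "chain_length ps \<equiv> sum_list (map fst ps)"

definition moore_path :: "(real \<Rightarrow> (real \<Rightarrow> 'b) \<Rightarrow> bool) \<Rightarrow> real \<Rightarrow> (real \<Rightarrow> 'b) \<Rightarrow> bool" where
  "moore_path P L g \<longleftrightarrow>
     (\<exists>ps. moore_chain P ps \<and> chain_length ps = L \<and> (\<forall>t\<in>{0..L}. moore ps t = g t))"

definition nondecr_map :: "real \<Rightarrow> real \<Rightarrow> (real \<Rightarrow> real) \<Rightarrow> bool" where
  "nondecr_map a b \<psi> \<longleftrightarrow> continuous_on {0..a} \<psi> \<and> mono_on {0..a} \<psi> \<and> \<psi> ` {0..a} \<subseteq> {0..b}"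

definition reparam_closed :: "(real \<Rightarrow> (real \<Rightarrow> 'b) \<Rightarrow> bool) \<Rightarrow> bool" where
  "reparam_closed P \<longleftrightarrow>
     (\<forall>l f l' \<psi>. P l f \<longrightarrow> l > 0 \<longrightarrow> l' > 0 \<longrightarrow> nondecr_map l' l \<psi> \<longrightarrow> P l' (f \<circ> \<psi>))"

lemma reparam_closedD:
  "reparam_closed P \<Longrightarrow> P l f \<Longrightarrow> l > 0 \<Longrightarrow> l' > 0 \<Longrightarrow> nondecr_map l' l \<psi> \<Longrightarrow> P l' (f \<circ> \<psi>)"
  unfolding reparam_closed_def by blast

lemma I1_iff_nondecr_map: "\<phi> \<in> I1 \<longleftrightarrow> nondecr_map 1 1 \<phi>"
  by (simp add: I1_def nondecr_map_def)

lemma nondecr_map_comp: "nondecr_map a b \<psi> \<Longrightarrow> nondecr_map b c \<theta> \<Longrightarrow> nondecr_map a c (\<theta> \<circ> \<psi>)"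
  unfolding nondecr_map_def
  by (auto intro: continuous_on_compose2[unfolded o_def] simp: mono_on_def image_subset_iff o_def)

lemma nondecr_map_divide: "a > 0 \<Longrightarrow> nondecr_map a 1 (\<lambda>t. t / a)"
  unfolding nondecr_map_def
  by (auto intro!: continuous_intros mono_onI divide_right_mono simp: image_subset_iff)

lemma nondecr_map_mult: "b \<ge> 0 \<Longrightarrow> nondecr_map 1 b (\<lambda>t. t * b)"
  unfolding nondecr_map_def
  by (auto intro!: continuous_intros mono_onI mult_right_mono
      simp: image_subset_iff mult_left_le_one_le)

lemma nondecr_map_continuous_map:
  "nondecr_map a b \<psi> \<Longrightarrow> continuous_map (top_of_set {0..a}) (top_of_set {0..b}) \<psi>"
  by (auto simp: nondecr_map_def)

lemma nondecr_map_restrict: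
  assumes \<psi>: "nondecr_map a b \<psi>" and "a' \<le> a" "\<And>t. t \<in> {0..a'} \<Longrightarrow> \<psi> t \<le> b'"
  shows "nondecr_map a' b' \<psi>"
proof -
  have sub: "{0..a'} \<subseteq> {0..a}" using assms(2) by auto
  have "\<psi> t \<in> {0..b'}" if "t \<in> {0..a'}" for t
  proof -
    have "\<psi> t \<in> {0..b}" using \<psi> sub that unfolding nondecr_map_def by blast
    then show ?thesis using assms(3)[OF that] by simp
  qed
  then show ?thesis
    using \<psi> continuous_on_subset[OF _ sub] mono_on_subset[OF _ sub]
    unfolding nondecr_map_def by blast
qed

lemma nondecr_map_shift_domain:
  assumes \<psi>: "nondecr_map a b \<psi>" and s: "0 \<le> s" "s \<le> a"
  shows "nondecr_map (a - s) b (\<lambda>t. \<psi> (t + s))"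
proof -
  have shift: "t + s \<in> {0..a}" if "t \<in> {0..a - s}" for t using that s by simp
  have cont: "continuous_on {0..a} \<psi>" and mono: "mono_on {0..a} \<psi>" and range: "\<psi> ` {0..a} \<subseteq> {0..b}"
    using \<psi> unfolding nondecr_map_def by auto
  have "continuous_on {0..a - s} (\<lambda>t. \<psi> (t + s))"
    by (rule continuous_on_compose2[OF cont]) (use shift s in \<open>auto intro!: continuous_intros\<close>)
  moreover have "mono_on {0..a - s} (\<lambda>t. \<psi> (t + s))"
  proof (rule mono_onI)
    fix x y assume "x \<in> {0..a - s}" "y \<in> {0..a - s}" "x \<le> y"
    then show "\<psi> (x + s) \<le> \<psi> (y + s)" using mono_onD[OF mono shift shift] by simp
  qed
  moreover have "(\<lambda>t. \<psi> (t + s)) ` {0..a - s} \<subseteq> {0..b}" using range shift by blast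
  ultimately show ?thesis unfolding nondecr_map_def by blast
qed

lemma nondecr_map_shift_range:
  assumes \<psi>: "nondecr_map a (c + d) \<psi>" and c: "\<And>t. t \<in> {0..a} \<Longrightarrow> c \<le> \<psi> t"
  shows "nondecr_map a d (\<lambda>t. \<psi> t - c)"
proof -
  have "\<psi> t - c \<in> {0..d}" if "t \<in> {0..a}" for t
  proof -
    have "\<psi> t \<in> {0..c + d}" using \<psi> that unfolding nondecr_map_def by blast
    then show ?thesis using c[OF that] by simp
  qed
  moreover have "continuous_on {0..a} (\<lambda>t. \<psi> t - c)"
    using \<psi> unfolding nondecr_map_def by (auto intro!: continuous_intros)
  moreover have "mono_on {0..a} (\<lambda>t. \<psi> t - c)"
    using \<psi> unfolding nondecr_map_def by (simp add: mono_on_def)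
  ultimately show ?thesis unfolding nondecr_map_def by blast
qed

lemma nondecr_map_crossing_cases:
  assumes \<psi>: "nondecr_map L b \<psi>" and L: "L > 0"
  obtains "\<And>t. t \<in> {0..L} \<Longrightarrow> \<psi> t \<le> c"
  | "\<And>t. t \<in> {0..L} \<Longrightarrow> c \<le> \<psi> t"
  | s where "0 < s" "s < L" "\<psi> s = c" "\<And>t. t \<in> {0..s} \<Longrightarrow> \<psi> t \<le> c"
    "\<And>t. t \<in> {s..L} \<Longrightarrow> c \<le> \<psi> t"
proof -
  have mono: "\<psi> s \<le> \<psi> t" if "0 \<le> s" "s \<le> t" "t \<le> L" for s t
    using \<psi> that unfolding nondecr_map_def by (auto simp: mono_on_def)
  consider "\<psi> L \<le> c" | "c \<le> \<psi> 0" | "\<psi> 0 < c" "c < \<psi> L" by linarith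
  then show thesis
  proof cases
    case 3
    then obtain s where s: "0 \<le> s" "s \<le> L" "\<psi> s = c"
      using IVT'[of \<psi> 0 c L] \<psi> L unfolding nondecr_map_def by auto
    with 3 have "0 < s" "s < L" by (auto simp: less_le)
    with s mono show thesis by (intro that(3)[of s]) auto
  qed (use mono L that(1,2) in \<open>force+\<close>)
qed

lemma composable_Nil [simp]: "composable []"
  and composable_single [simp]: "composable [p]"
  by (auto simp: composable_def)

lemma moore_Cons: "moore ((l, f) # ps) t = (if t \<le> l \<or> ps = [] then f t else moore ps (t - l))"
  by (cases ps) auto

lemma composable_Cons:
  "composable ((l, f) # ps) \<longleftrightarrow> composable ps \<and> (ps \<noteq> [] \<longrightarrow> f l = snd (hd ps) 0)"
  by (cases ps) (auto simp: composable_def less_Suc_eq_0_disj nth_Cons')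

lemma moore_chain_start: "moore_chain P ps \<Longrightarrow> moore ps 0 = snd (hd ps) 0"
  by (cases ps) (auto simp: moore_chain_def moore_Cons)

lemma moore_chain_Cons:
  "moore_chain P ((l, f) # ps) \<longleftrightarrow>
     l > 0 \<and> P l f \<and> (ps = [] \<or> moore_chain P ps \<and> f l = moore ps 0)"
  by (auto simp: moore_chain_def composable_Cons moore_chain_start)

lemma moore_Cons_tail:
  "moore_chain P ((l, f) # ps) \<Longrightarrow> ps \<noteq> [] \<Longrightarrow> l \<le> t \<Longrightarrow> moore ((l, f) # ps) t = moore ps (t - l)"
  by (cases "t = l") (auto simp: moore_Cons moore_chain_Cons)

lemma moore_chain_mono:
  "moore_chain P ps \<Longrightarrow> (\<And>l f. (l, f) \<in> set ps \<Longrightarrow> P l f \<Longrightarrow> l > 0 \<Longrightarrow> Q l f) \<Longrightarrow>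
    moore_chain Q ps"
  unfolding moore_chain_def by auto

lemma moore_chain_length_pos: "moore_chain P ps \<Longrightarrow> chain_length ps > 0"
proof (induction ps)
  case (Cons p ps)
  then show ?case by (cases p; cases "ps = []") (auto simp: moore_chain_Cons)
qed (simp add: moore_chain_def)

lemma moore_append:
  assumes "moore_chain P A" "B \<noteq> []"
  shows "moore (A @ B) t = (if t \<le> chain_length A then moore A t else moore B (t - chain_length A))"
  using assms
proof (induction A arbitrary: t)
  case (Cons p A)
  obtain l f where p: "p = (l, f)" by fastforce
  show ?case
  proof (cases "A = []")
    case False
    then have "moore_chain P A" "l > 0" using Cons.prems p by (auto simp: moore_chain_Cons)
    with moore_chain_length_pos[of P A] show ?thesis
      using Cons False p by (auto simp: moore_Cons algebra_simps)
  qed (use Cons.prems p in \<open>simp add: moore_Cons\<close>)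
qed (simp add: moore_chain_def)

lemma moore_chain_append:
  assumes "moore_chain P A" "moore_chain P B" "moore A (chain_length A) = moore B 0"
  shows "moore_chain P (A @ B)"
  using assms
proof (induction A)
  case (Cons p A)
  obtain l f where p: "p = (l, f)" by fastforce
  show ?case
  proof (cases "A = []")
    case False
    then have A: "moore_chain P A" "l > 0" "f l = moore A 0"
      using Cons.prems p by (auto simp: moore_chain_Cons)
    have "moore A (chain_length A) = moore B 0"
      using Cons.prems(3) A(2) moore_chain_length_pos[OF A(1)] False p by (simp add: moore_Cons)
    then have "moore_chain P (A @ B)" by (rule Cons.IH[OF A(1) Cons.prems(2)])
    moreover have "moore (A @ B) 0 = moore A 0"
      using moore_append[OF A(1)] moore_chain_length_pos[OF A(1)] Cons.prems(2)
      by (simp add: moore_chain_def)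
    ultimately show ?thesis using Cons.prems(1) A p by (simp add: moore_chain_Cons)
  qed (use Cons.prems p in \<open>simp add: moore_chain_Cons\<close>)
qed (simp add: moore_chain_def)

lemma moore_path_cong: "moore_path P L g \<Longrightarrow> (\<And>t. t \<in> {0..L} \<Longrightarrow> g t = h t) \<Longrightarrow> moore_path P L h"
  unfolding moore_path_def by auto

lemma moore_path_single: "P L g \<Longrightarrow> L > 0 \<Longrightarrow> moore_path P L g"
  unfolding moore_path_def by (intro exI[of _ "[(L, g)]"]) (simp add: moore_chain_def)

lemma moore_path_pos: "moore_path P L g \<Longrightarrow> L > 0"
  unfolding moore_path_def using moore_chain_length_pos by blast

lemma moore_path_mono:
  "moore_path P L g \<Longrightarrow> (\<And>l f. P l f \<Longrightarrow> l > 0 \<Longrightarrow> Q l f) \<Longrightarrow> moore_path Q L g"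
  unfolding moore_path_def using moore_chain_mono by metis

lemma moore_path_concat:
  assumes g: "moore_path P a g" and h: "moore_path P b h" and gh: "g a = h 0"
  shows "moore_path P (a + b) (\<lambda>t. if t \<le> a then g t else h (t - a))"
proof -
  obtain A where A: "moore_chain P A" "chain_length A = a" "\<forall>t\<in>{0..a}. moore A t = g t"
    using g unfolding moore_path_def by blast
  obtain B where B: "moore_chain P B" "chain_length B = b" "\<forall>t\<in>{0..b}. moore B t = h t"
    using h unfolding moore_path_def by blast
  have a: "a > 0" and b: "b > 0" using g h by (auto dest: moore_path_pos)
  have "moore A (chain_length A) = moore B 0" using A B a b gh by auto
  then have "moore_chain P (A @ B)" by (rule moore_chain_append[OF A(1) B(1)])
  moreover have "moore (A @ B) t = (if t \<le> a then g t else h (t - a))" if "t \<in> {0..a + b}" for t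
    using moore_append[OF A(1), of B t] A B that by (auto simp: moore_chain_def)
  ultimately show ?thesis unfolding moore_path_def using A(2) B(2) by (intro exI[of _ "A @ B"]) auto
qed

lemma moore_path_split:
  assumes "0 < s" "s < L" "moore_path P s g" "moore_path P (L - s) (\<lambda>t. g (t + s))"
  shows "moore_path P L g"
proof -
  have "moore_path P (s + (L - s)) (\<lambda>t. if t \<le> s then g t else g (t - s + s))"
    using assms(3,4) by (rule moore_path_concat) simp
  then have "moore_path P L (\<lambda>t. if t \<le> s then g t else g (t - s + s))" by simp
  then show ?thesis by (rule moore_path_cong) auto
qed

lemma moore_path_chain: "moore_chain (moore_path P) ps \<Longrightarrow> moore_path P (chain_length ps) (moore ps)"
proof (induction ps)
  case (Cons p ps)
  obtain l f where p: "p = (l, f)" by fastforce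
  show ?case
  proof (cases "ps = []")
    case False
    then have "moore_path P l f" "moore_path P (chain_length ps) (moore ps)" "f l = moore ps 0"
      using Cons p by (auto simp: moore_chain_Cons)
    from moore_path_concat[OF this] show ?thesis using False p by (simp add: moore_Cons)
  qed (use Cons.prems p in \<open>simp add: moore_chain_Cons\<close>)
qed (simp add: moore_chain_def)

lemma moore_path_flatten: "moore_path (moore_path P) L g \<Longrightarrow> moore_path P L g"
  by (metis moore_path_chain moore_path_cong moore_path_def)

lemma moore_chain_reparam:
  assumes "reparam_closed P" and "moore_chain P ps" and "L > 0"
    and "nondecr_map L (chain_length ps) \<psi>"
  shows "moore_path P L (moore ps \<circ> \<psi>)"
  using assms(2-)
proof (induction ps arbitrary: L \<psi>)
  case (Cons p rest)
  obtain l f where p: "p = (l, f)" by fastforce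
  have l: "l > 0" "P l f" using Cons.prems(1) by (simp_all add: p moore_chain_Cons)
  have head: "moore_path P a (moore (p # rest) \<circ> \<psi>')" if "a > 0" "nondecr_map a l \<psi>'" for a \<psi>'
  proof -
    have "moore_path P a (f \<circ> \<psi>')"
      using reparam_closedD[OF assms(1) l(2,1) that] that(1) by (rule moore_path_single)
    then show ?thesis
      by (rule moore_path_cong)
        (use that(2) in \<open>auto simp: p moore_Cons nondecr_map_def image_subset_iff\<close>)
  qed
  show ?case
  proof (cases "rest = []")
    case True
    then have "nondecr_map L l \<psi>" using Cons.prems(3) by (simp add: p)
    then show ?thesis using head Cons.prems(2) by blast
  next
    case False
    then have rest: "moore_chain P rest" using Cons.prems(1) by (simp add: p moore_chain_Cons)
    have tail: "moore_path P a (moore (p # rest) \<circ> \<psi>')"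
      if "a > 0" "nondecr_map a (l + chain_length rest) \<psi>'" "\<And>t. t \<in> {0..a} \<Longrightarrow> l \<le> \<psi>' t" for a \<psi>'
    proof -
      have "moore_path P a (moore rest \<circ> (\<lambda>t. \<psi>' t - l))"
        using nondecr_map_shift_range that by (intro Cons.IH[OF rest]) blast+
      then show ?thesis
        by (rule moore_path_cong) (use that(3) Cons.prems(1) False in \<open>simp add: p moore_Cons_tail\<close>)
    qed
    have \<psi>: "nondecr_map L (l + chain_length rest) \<psi>" using Cons.prems(3) by (simp add: p)
    from this Cons.prems(2) show ?thesis
    proof (cases rule: nondecr_map_crossing_cases[where c = l])
      case 1
      then show ?thesis using head Cons.prems(2) nondecr_map_restrict[OF \<psi>] by blast
    next
      case 2
      then show ?thesis using tail Cons.prems(2) \<psi> by blast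
    next
      case (3 s)
      have "moore_path P s (moore (p # rest) \<circ> \<psi>)"
        using 3 by (intro head nondecr_map_restrict[OF \<psi>]) auto
      moreover have "moore_path P (L - s) (moore (p # rest) \<circ> (\<lambda>t. \<psi> (t + s)))"
        using 3 by (intro tail nondecr_map_shift_domain[OF \<psi>]) auto
      ultimately show ?thesis using 3 by (intro moore_path_split[of s L]) (simp_all add: o_def)
    qed
  qed
qed (simp add: moore_chain_def)

lemma moore_path_reparam:
  assumes "reparam_closed P" and "moore_path P L g" and "L' > 0" and "nondecr_map L' L \<psi>"
  shows "moore_path P L' (g \<circ> \<psi>)"
proof -
  obtain ps where ps: "moore_chain P ps" "chain_length ps = L" "\<forall>t\<in>{0..L}. moore ps t = g t"
    using assms(2) unfolding moore_path_def by blast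
  have "moore_path P L' (moore ps \<circ> \<psi>)"
    using moore_chain_reparam[OF assms(1) ps(1) assms(3)] assms(4) ps(2) by simp
  then show ?thesis
    by (rule moore_path_cong) (use assms(4) ps(3) in \<open>auto simp: nondecr_map_def image_subset_iff\<close>)
qed

lemma moore_path_constant:
  assumes "reparam_closed P" "moore_path P L g" "s \<in> {0..L}" "L' > 0"
  shows "moore_path P L' (\<lambda>_. g s)"
proof -
  have "nondecr_map L' L (\<lambda>_. s)" using assms(3) by (auto simp: nondecr_map_def mono_on_const)
  from moore_path_reparam[OF assms(1,2,4) this] show ?thesis by (simp add: o_def)
qed

lemma moore_chain_constant:
  "moore_chain (\<lambda>l f. f constant_on {0..l}) ps \<Longrightarrow> moore ps constant_on {0..chain_length ps}"
proof (induction ps)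
  case (Cons p ps)
  obtain l f where p: "p = (l, f)" by fastforce
  show ?case
  proof (cases "ps = []")
    case False
    then have "f constant_on {0..l}" "moore ps constant_on {0..chain_length ps}"
      "l > 0" "f l = moore ps 0"
      using Cons p by (auto simp: moore_chain_Cons)
    moreover have "0 \<le> chain_length ps"
      using Cons.prems False p moore_chain_length_pos by (fastforce simp: moore_chain_Cons)
    ultimately show ?thesis using False
      unfolding p constant_on_def by (force simp: moore_Cons)
  qed (use Cons.prems p in \<open>simp add: moore_chain_Cons\<close>)
qed (simp add: moore_chain_def)

lemma moore_path_constant_on:
  assumes "reparam_closed P" "moore_path P L g" "s \<in> {0..L}" "l > 0"
    and "f constant_on {0..l}" "t \<in> {0..l}" "f t = g s"
  shows "moore_path P l f"
proof -
  have "f x = g s" if "x \<in> {0..l}" for x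
    using assms(5-7) that unfolding constant_on_def by metis
  with moore_path_constant[OF assms(1-4)] show ?thesis by (auto intro: moore_path_cong)
qed

text \<open>A constant piece is absorbed as a constant reparametrization of a \<open>P\<close>-piece it
  touches, so at least one \<open>P\<close>-piece is needed.\<close>
lemma moore_path_absorb_constant:
  assumes P: "reparam_closed P"
  shows "moore_chain (\<lambda>l f. P l f \<or> f constant_on {0..l}) ps \<Longrightarrow> \<exists>(l, f)\<in>set ps. P l f \<Longrightarrow>
    moore_path P (chain_length ps) (moore ps)"
proof (induction ps)
  case (Cons p rest)
  obtain l f where p: "p = (l, f)" by fastforce
  show ?case
  proof (cases "rest = []")
    case True
    then show ?thesis using Cons.prems by (auto simp: p moore_chain_Cons moore_path_single)
  next
    case False
    then have l: "l > 0" "P l f \<or> f constant_on {0..l}" "f l = moore rest 0"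
      and rest: "moore_chain (\<lambda>l f. P l f \<or> f constant_on {0..l}) rest"
      using Cons.prems(1) by (auto simp: p moore_chain_Cons)
    have len: "chain_length rest > 0" using moore_chain_length_pos[OF rest] .
    have "moore_path P l f \<and> moore_path P (chain_length rest) (moore rest)"
    proof (cases "\<exists>(l, f)\<in>set rest. P l f")
      case True
      then have tail: "moore_path P (chain_length rest) (moore rest)" by (rule Cons.IH[OF rest])
      then have "moore_path P l f" if "f constant_on {0..l}"
        using moore_path_constant_on[OF P tail _ l(1) that, of 0 l] l len by simp
      then show ?thesis using tail l moore_path_single by blast
    next
      case False
      then have head: "moore_path P l f"
        using Cons.prems(2) l(1) by (auto simp: p moore_path_single)
      have "moore_chain (\<lambda>l f. f constant_on {0..l}) rest"
      proof (rule moore_chain_mono[OF rest])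
        fix l' f' assume "(l', f') \<in> set rest" "P l' f' \<or> f' constant_on {0..l'}"
        with False show "f' constant_on {0..l'}" by auto
      qed
      from moore_path_constant_on[OF P head _ len moore_chain_constant[OF this], of l 0]
      show ?thesis using head l len by simp
    qed
    moreover have "moore (p # rest) = (\<lambda>t. if t \<le> l then f t else moore rest (t - l))"
      using False by (auto simp: p moore_Cons)
    ultimately show ?thesis using moore_path_concat[of P l f "chain_length rest" "moore rest"] l(3)
      by (simp add: p)
  qed
qed (simp add: moore_chain_def)

lemma continuous_map_join:
  fixes a b :: real
  assumes "continuous_map (top_of_set {0..a}) T g" "continuous_map (top_of_set {0..b}) T h"
    and "g a = h 0" "0 \<le> a" "0 \<le> b"
  shows "continuous_map (top_of_set {0..a + b}) T (\<lambda>t. if t \<le> a then g t else h (t - a))"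
proof (rule continuous_map_cases_le[of _ "\<lambda>t. t" "\<lambda>_. a"])
  let ?X = "top_of_set {0..a + b}"
  have "{0..a + b} \<inter> {t. t \<in> topspace ?X \<and> t \<le> a} = {0..a}" using assms(5) by auto
  then have "subtopology ?X {t. t \<in> topspace ?X \<and> t \<le> a} = top_of_set {0..a}"
    by (simp only: subtopology_subtopology)
  then show "continuous_map (subtopology ?X {t. t \<in> topspace ?X \<and> t \<le> a}) T g"
    using assms(1) by simp
  have "{0..a + b} \<inter> {t. t \<in> topspace ?X \<and> a \<le> t} = {a..a + b}" using assms(4) by auto
  then have sub: "subtopology ?X {t. t \<in> topspace ?X \<and> a \<le> t} = top_of_set {a..a + b}"
    by (simp only: subtopology_subtopology)
  have "continuous_map (top_of_set {a..a + b}) (top_of_set {0..b}) (\<lambda>t. t - a)"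
    by (auto intro!: continuous_intros)
  from continuous_map_compose[OF this assms(2)]
  show "continuous_map (subtopology ?X {t. t \<in> topspace ?X \<and> a \<le> t}) T (\<lambda>t. h (t - a))"
    unfolding sub o_def .
qed (use assms(3) in auto)

lemma moore_chain_continuous:
  "moore_chain (\<lambda>l f. continuous_map (top_of_set {0..l}) T f) ps \<Longrightarrow>
    continuous_map (top_of_set {0..chain_length ps}) T (moore ps)"
proof (induction ps)
  case (Cons p ps)
  obtain l f where p: "p = (l, f)" by fastforce
  show ?case
  proof (cases "ps = []")
    case False
    then have "continuous_map (top_of_set {0..l}) T f" "l > 0" "f l = moore ps 0"
      "moore_chain (\<lambda>l f. continuous_map (top_of_set {0..l}) T f) ps"
      using Cons.prems by (auto simp: p moore_chain_Cons)
    with continuous_map_join[of l T f "chain_length ps" "moore ps"] Cons.IH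
      moore_chain_length_pos[of "\<lambda>l f. continuous_map (top_of_set {0..l}) T f" ps]
    show ?thesis using False by (simp add: p moore_Cons[abs_def])
  qed (use Cons.prems p in \<open>simp add: moore_chain_Cons\<close>)
qed (simp add: moore_chain_def)

lemma moore_path_continuous:
  assumes "moore_path P L g" and "\<And>l f. P l f \<Longrightarrow> l > 0 \<Longrightarrow> continuous_map (top_of_set {0..l}) T f"
  shows "continuous_map (top_of_set {0..L}) T g"
proof -
  obtain ps where "moore_chain P ps" "chain_length ps = L" "\<forall>t\<in>{0..L}. moore ps t = g t"
    using assms(1) unfolding moore_path_def by blast
  with moore_chain_continuous[OF moore_chain_mono] assms(2) show ?thesis
    by (metis continuous_map_eq topspace_euclidean_subtopology)
qed

lemma unit_path_eqI: "(\<And>t. t \<in> {0..1} \<Longrightarrow> f t = g t) \<Longrightarrow> unit_path f = unit_path g"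
  unfolding unit_path_def by (rule restrict_ext)

lemma unit_path_apply [simp]: "t \<in> {0..1} \<Longrightarrow> unit_path f t = f t"
  by (simp add: unit_path_def)

lemma unit_path_in_extensional [simp]: "unit_path f \<in> extensional {0..1}"
  by (simp add: unit_path_def)

lemma unit_path_idem [simp]: "unit_path (unit_path f) = unit_path f"
  by (simp add: unit_path_def)

lemma unit_path_extensional: "\<gamma> \<in> extensional {0..1} \<Longrightarrow> unit_path \<gamma> = \<gamma>"
  by (simp add: unit_path_def extensional_restrict)

lemma unit_path_comp_unit_path:
  assumes "\<phi> ` {0..1} \<subseteq> {0..1}"
  shows "unit_path (unit_path g \<circ> \<phi>) = unit_path (g \<circ> \<phi>)"
proof (rule unit_path_eqI)
  fix t :: real assume "t \<in> {0..1}"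
  then have "\<phi> t \<in> {0..1}" using assms by blast
  then show "(unit_path g \<circ> \<phi>) t = (g \<circ> \<phi>) t" by simp
qed

lemma continuous_map_unit_path_iff [simp]:
  "continuous_map (top_of_set {0..1}) T (unit_path g) \<longleftrightarrow> continuous_map (top_of_set {0..1}) T g"
  by (auto elim!: continuous_map_eq)

lemma unit_paths_moore_chain:
  "{unit_path (moore ps) | ps. moore_chain P ps \<and> chain_length ps = 1} =
   {unit_path g | g. moore_path P 1 g}"
proof -
  have "unit_path g = unit_path (moore ps)" if "\<forall>t\<in>{0..1}. moore ps t = g t" for g ps
    using that by (auto intro: unit_path_eqI)
  then show ?thesis unfolding moore_path_def by blast
qed

lemma normcomp_unit_path: "normcomp (unit_path g1) (unit_path g2) = normcomp g1 g2"
  unfolding normcomp_def by (rule unit_path_eqI) auto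

lemma normcomp_0 [simp]: "normcomp g1 g2 0 = g1 0" and normcomp_1 [simp]: "normcomp g1 g2 1 = g2 1"
  by (simp_all add: normcomp_def)

lemma normcomp_in_extensional [simp]: "normcomp g1 g2 \<in> extensional {0..1}"
  by (simp add: normcomp_def)

lemma normcomp_eq_join: "t \<in> {0..1} \<Longrightarrow>
    normcomp g1 g2 t = (if t \<le> 1/2 then g1 (2 * t) else g2 (2 * (t - 1/2)))"
  by (simp add: normcomp_def algebra_simps)

lemma moore_path_normcomp:
  assumes "reparam_closed P" "moore_path P 1 g1" "moore_path P 1 g2" "g1 1 = g2 0"
  shows "moore_path P 1 (normcomp g1 g2)"
proof -
  have half: "moore_path P (1/2) (\<lambda>t. g (2 * t))" if "moore_path P 1 g" for g
    using moore_path_reparam[OF assms(1) that, of "1/2"] nondecr_map_divide[of "1/2"]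
    by (simp add: o_def mult.commute)
  have "moore_path P (1/2 + 1/2) (\<lambda>t. if t \<le> 1/2 then g1 (2 * t) else g2 (2 * (t - 1/2)))"
    using moore_path_concat[OF half half] assms(2-4) by simp
  then have "moore_path P 1 (\<lambda>t. if t \<le> 1/2 then g1 (2 * t) else g2 (2 * (t - 1/2)))"
    by simp
  then show ?thesis by (rule moore_path_cong) (simp add: normcomp_eq_join)
qed

lemma unit_moore_path_reparam:
  assumes "reparam_closed P" "moore_path P 1 g" "\<phi> \<in> I1"
  shows "unit_path (unit_path g \<circ> \<phi>) \<in> {unit_path g | g. moore_path P 1 g}"
proof -
  have "moore_path P 1 (g \<circ> \<phi>)"
    using assms by (intro moore_path_reparam) (auto simp: I1_iff_nondecr_map)
  moreover have "\<phi> ` {0..1} \<subseteq> {0..1}" using assms(3) by (simp add: I1_def)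
  ultimately show ?thesis by (auto simp: unit_path_comp_unit_path)
qed

lemma unit_moore_path_normcomp:
  assumes "reparam_closed P" "moore_path P 1 g1" "moore_path P 1 g2" "g1 1 = g2 0"
  shows "normcomp (unit_path g1) (unit_path g2) \<in> {unit_path g | g. moore_path P 1 g}"
proof -
  have "normcomp (unit_path g1) (unit_path g2) = unit_path (normcomp g1 g2)"
    unfolding normcomp_unit_path by (simp add: normcomp_def)
  with moore_path_normcomp[OF assms] show ?thesis by blast
qed

lemma continuous_map_normcomp:
  assumes "continuous_map (top_of_set {0..1}) T g1" "continuous_map (top_of_set {0..1}) T g2"
    and "g1 1 = g2 0"
  shows "continuous_map (top_of_set {0..1}) T (normcomp g1 g2)"
proof -
  have double: "continuous_map (top_of_set {0..1/2}) (top_of_set {0..1}) (\<lambda>t::real. 2 * t)"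
    by (auto intro!: continuous_intros)
  have "continuous_map (top_of_set {0..1/2 + 1/2}) T
      (\<lambda>t. if t \<le> 1/2 then g1 (2 * t) else g2 (2 * (t - 1/2)))"
    using continuous_map_join[OF continuous_map_compose[OF double assms(1)]
        continuous_map_compose[OF double assms(2)]] assms(3)
    unfolding o_def by simp
  then show ?thesis by (auto simp: normcomp_eq_join elim!: continuous_map_eq)
qed

section \<open>The directed space of a multipointed d-space\<close>

definition exec_piece :: "'b mpds \<Rightarrow> real \<Rightarrow> (real \<Rightarrow> 'b) \<Rightarrow> bool" where
  "exec_piece X l f \<longleftrightarrow> (\<exists>\<gamma>\<in>mpaths X. \<exists>\<phi>\<in>I1. \<forall>t\<in>{0..l}. f t = \<gamma> (\<phi> (t / l)))"

lemma dpaths_Sp: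
  "dpaths (Sp X) = {unit_path (\<lambda>_. x) | x. x \<in> topspace (mspace X)} \<union>
     {unit_path g | g. moore_path (exec_piece X) 1 g}"
  unfolding Sp_def unit_paths_moore_chain[symmetric] moore_chain_def exec_piece_def by auto

lemma dtop_Sp [simp]: "dtop (Sp X) = mspace X"
  by (simp add: Sp_def)

lemma dpaths_SpE:
  assumes "\<gamma> \<in> dpaths (Sp X)"
  obtains (const) x where "x \<in> topspace (mspace X)" "\<gamma> = unit_path (\<lambda>_. x)"
  | (moore) g where "moore_path (exec_piece X) 1 g" "\<gamma> = unit_path g"
  using assms unfolding dpaths_Sp by blast

lemma reparam_closed_exec_piece: "reparam_closed (exec_piece X)"
  unfolding reparam_closed_def
proof (intro allI impI)
  fix l l' :: real and f :: "real \<Rightarrow> 'a" and \<psi>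
  assume "exec_piece X l f" and l: "l > 0" "l' > 0" and \<psi>: "nondecr_map l' l \<psi>"
  then obtain \<gamma> \<phi> where \<gamma>: "\<gamma> \<in> mpaths X" "\<phi> \<in> I1" "\<forall>t\<in>{0..l}. f t = \<gamma> (\<phi> (t / l))"
    unfolding exec_piece_def by blast
  let ?\<theta> = "\<phi> \<circ> ((\<lambda>t. t / l) \<circ> (\<psi> \<circ> (\<lambda>t. t * l')))"
  have "nondecr_map 1 l (\<psi> \<circ> (\<lambda>t. t * l'))"
    using nondecr_map_comp[OF nondecr_map_mult \<psi>] l by simp
  then have "?\<theta> \<in> I1"
    using nondecr_map_divide[OF l(1)] \<gamma>(2) unfolding I1_iff_nondecr_map
    by (blast intro: nondecr_map_comp)
  moreover have "(f \<circ> \<psi>) t = \<gamma> (?\<theta> (t / l'))" if "t \<in> {0..l'}" for t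
  proof -
    have "\<psi> t \<in> {0..l}" using \<psi> that unfolding nondecr_map_def by blast
    then show ?thesis using \<gamma>(3) l by simp
  qed
  ultimately show "exec_piece X l' (f \<circ> \<psi>)" unfolding exec_piece_def using \<gamma>(1) by blast
qed

lemma exec_piece_continuous:
  assumes X: "is_mpds X" and f: "exec_piece X l f" and l: "l > 0"
  shows "continuous_map (top_of_set {0..l}) (mspace X) f"
proof -
  obtain \<gamma> \<phi> where \<gamma>: "\<gamma> \<in> mpaths X" "\<phi> \<in> I1" "\<forall>t\<in>{0..l}. f t = \<gamma> (\<phi> (t / l))"
    using f unfolding exec_piece_def by blast
  have \<theta>: "nondecr_map l 1 (\<phi> \<circ> (\<lambda>t. t / l))"
    using nondecr_map_divide[OF l] \<gamma>(2) unfolding I1_iff_nondecr_map by (rule nondecr_map_comp)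
  have "continuous_map (top_of_set {0..1}) (mspace X) \<gamma>"
    using X \<gamma>(1) unfolding is_mpds_def by blast
  from continuous_map_compose[OF nondecr_map_continuous_map[OF \<theta>] this]
  have "continuous_map (top_of_set {0..l}) (mspace X) (\<gamma> \<circ> (\<phi> \<circ> (\<lambda>t. t / l)))" .
  then show ?thesis by (rule continuous_map_eq) (use \<gamma>(3) in simp)
qed

lemma dpaths_Sp_moore_through:
  assumes "\<gamma> \<in> dpaths (Sp X)" "moore_path (exec_piece X) 1 h" "s \<in> {0..1}" "t \<in> {0..1}"
    and "\<gamma> t = h s"
  shows "\<exists>g. \<gamma> = unit_path g \<and> moore_path (exec_piece X) 1 g"
  using assms(1)
proof (cases rule: dpaths_SpE)
  case (const x)
  then have "\<gamma> = unit_path (\<lambda>_. h s)" using assms(4,5) by simp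
  then show ?thesis using moore_path_constant[OF reparam_closed_exec_piece assms(2,3)] by auto
qed blast

lemma dpaths_Sp_normcomp:
  assumes \<gamma>1: "\<gamma>1 \<in> dpaths (Sp X)" and \<gamma>2: "\<gamma>2 \<in> dpaths (Sp X)" and e: "\<gamma>1 1 = \<gamma>2 0"
  shows "normcomp \<gamma>1 \<gamma>2 \<in> dpaths (Sp X)"
proof (cases "\<exists>g1. \<gamma>1 = unit_path g1 \<and> moore_path (exec_piece X) 1 g1")
  case True
  then obtain g1 where g1: "\<gamma>1 = unit_path g1" "moore_path (exec_piece X) 1 g1" by blast
  have "\<exists>g2. \<gamma>2 = unit_path g2 \<and> moore_path (exec_piece X) 1 g2"
    by (rule dpaths_Sp_moore_through[OF \<gamma>2 g1(2), of 1 0]) (use e g1(1) in simp_all)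
  then obtain g2 where g2: "\<gamma>2 = unit_path g2" "moore_path (exec_piece X) 1 g2" by blast
  have "g1 1 = g2 0" using e g1(1) g2(1) by simp
  from unit_moore_path_normcomp[OF reparam_closed_exec_piece g1(2) g2(2) this]
  show ?thesis unfolding dpaths_Sp g1(1) g2(1) by blast
next
  case False
  from \<gamma>1 obtain x where x: "x \<in> topspace (mspace X)" "\<gamma>1 = unit_path (\<lambda>_. x)"
  proof (cases rule: dpaths_SpE)
    case (moore g)
    then show ?thesis using False by blast
  qed
  have \<gamma>2x: "\<gamma>2 = unit_path (\<lambda>_. x)"
    using \<gamma>2
  proof (cases rule: dpaths_SpE)
    case (const y)
    then show ?thesis using e x by simp
  next
    case (moore g2)
    have "\<exists>g1. \<gamma>1 = unit_path g1 \<and> moore_path (exec_piece X) 1 g1"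
      by (rule dpaths_Sp_moore_through[OF \<gamma>1 moore(1), of 0 1]) (use e moore(2) in simp_all)
    then show ?thesis using False by blast
  qed
  have "normcomp \<gamma>1 \<gamma>2 = unit_path (\<lambda>_. x)"
    unfolding x(2) \<gamma>2x normcomp_unit_path by (simp add: normcomp_def)
  then show ?thesis unfolding dpaths_Sp using x(1) by blast
qed

lemma dpaths_Sp_reparam:
  assumes \<gamma>: "\<gamma> \<in> dpaths (Sp X)" and \<phi>: "\<phi> \<in> I1"
  shows "unit_path (\<gamma> \<circ> \<phi>) \<in> dpaths (Sp X)"
  using \<gamma>
proof (cases rule: dpaths_SpE)
  case (const x)
  have "\<phi> ` {0..1} \<subseteq> {0..1}" using \<phi> by (simp add: I1_def)
  then have "unit_path (\<gamma> \<circ> \<phi>) = unit_path ((\<lambda>_. x) \<circ> \<phi>)"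
    unfolding const(2) by (rule unit_path_comp_unit_path)
  then have "unit_path (\<gamma> \<circ> \<phi>) = unit_path (\<lambda>_. x)" by (simp add: o_def)
  then show ?thesis unfolding dpaths_Sp using const(1) by blast
next
  case (moore g)
  from unit_moore_path_reparam[OF reparam_closed_exec_piece moore(1) \<phi>]
  show ?thesis unfolding dpaths_Sp moore(2) by blast
qed

lemma is_dspace_Sp:
  assumes X: "is_mpds X"
  shows "is_dspace (Sp X)"
proof -
  have "\<gamma> \<in> extensional {0..1} \<and> continuous_map (top_of_set {0..1}) (mspace X) \<gamma>"
    if "\<gamma> \<in> dpaths (Sp X)" for \<gamma>
    using that
  proof (cases rule: dpaths_SpE)
    case (moore g)
    then show ?thesis using moore_path_continuous[OF moore(1) exec_piece_continuous[OF X]] by simp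
  qed simp
  moreover have "unit_path (\<lambda>_. x) \<in> dpaths (Sp X)" if "x \<in> topspace (mspace X)" for x
    unfolding dpaths_Sp using that by blast
  ultimately show ?thesis
    unfolding is_dspace_def dtop_Sp using dpaths_Sp_normcomp dpaths_Sp_reparam by blast
qed

section \<open>The geometric realization\<close>

lemma openin_geo_top:
  "openin (geo_top K) U \<longleftrightarrow> U \<subseteq> geo_carrier K \<and>
     (\<forall>n c. c \<in> cells K n \<longrightarrow> openin (top_of_set (cube n)) {x \<in> cube n. cell_map K n c x \<in> U})"
proof -
  have Int: "{x \<in> cube n. cell_map K n c x \<in> S \<inter> T} =
      {x \<in> cube n. cell_map K n c x \<in> S} \<inter> {x \<in> cube n. cell_map K n c x \<in> T}" for n c S T
    by blast
  have Union: "{x \<in> cube n. cell_map K n c x \<in> \<Union>\<U>} =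
      (\<Union>U\<in>\<U>. {x \<in> cube n. cell_map K n c x \<in> U})" for n c \<U>
    by blast
  have "istopology (\<lambda>U. U \<subseteq> geo_carrier K \<and> (\<forall>n c. c \<in> cells K n \<longrightarrow>
      openin (top_of_set (cube n)) {x \<in> cube n. cell_map K n c x \<in> U}))"
    unfolding istopology_def Int Union by (auto intro: openin_Int openin_Union)
  then show ?thesis unfolding geo_top_def by simp
qed

lemma cell_map_in_geo_carrier: "c \<in> cells K n \<Longrightarrow> x \<in> cube n \<Longrightarrow> cell_map K n c x \<in> geo_carrier K"
  unfolding cell_map_def geo_carrier_def geo_pts_def by auto

lemma topspace_geo_top [simp]: "topspace (geo_top K) = geo_carrier K"
proof
  show "topspace (geo_top K) \<subseteq> geo_carrier K"
    using openin_geo_top[of K "topspace (geo_top K)"] by simp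
  have "{x \<in> cube n. cell_map K n c x \<in> geo_carrier K} = cube n" if "c \<in> cells K n" for n c
    using cell_map_in_geo_carrier[OF that] by blast
  then have "openin (geo_top K) (geo_carrier K)" unfolding openin_geo_top by simp
  then show "geo_carrier K \<subseteq> topspace (geo_top K)" by (rule openin_subset)
qed

lemma continuous_map_cell_map:
  "c \<in> cells K n \<Longrightarrow> continuous_map (top_of_set (cube n)) (geo_top K) (cell_map K n c)"
  unfolding continuous_map_def using cell_map_in_geo_carrier[of c K n]
  by (auto simp: openin_geo_top)

lemma dir_cube_path_reparam:
  assumes "dir_cube_path n l \<rho>" "nondecr_map l' l \<psi>"
  shows "dir_cube_path n l' (\<rho> \<circ> \<psi>)"
  using assms unfolding dir_cube_path_def nondecr_map_def
  by (auto intro: continuous_on_compose2[unfolded o_def] simp: mono_on_def image_subset_iff)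

definition cube_piece :: "'a precub \<Rightarrow> real \<Rightarrow> (real \<Rightarrow> 'a gpt) \<Rightarrow> bool" where
  "cube_piece K l f \<longleftrightarrow> (\<exists>n c \<rho>. c \<in> cells K n \<and> dir_cube_path n l \<rho> \<and>
     (\<forall>t\<in>{0..l}. f t = cell_map K n c (\<rho> t)))"

lemma geo_dipaths_eq: "geo_dipaths K = {unit_path g | g. moore_path (cube_piece K) 1 g}"
  unfolding geo_dipaths_def unit_paths_moore_chain[symmetric] moore_chain_def cube_piece_def by auto

lemma reparam_closed_cube_piece: "reparam_closed (cube_piece K)"
  unfolding reparam_closed_def cube_piece_def
proof (intro allI impI)
  fix l l' :: real and f :: "real \<Rightarrow> 'a gpt" and \<psi>
  assume "\<exists>n c \<rho>. c \<in> cells K n \<and> dir_cube_path n l \<rho> \<and> (\<forall>t\<in>{0..l}. f t = cell_map K n c (\<rho> t))"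
    and "nondecr_map l' l \<psi>"
  moreover from this(2) have "\<psi> t \<in> {0..l}" if "t \<in> {0..l'}" for t
    using that unfolding nondecr_map_def by blast
  ultimately show "\<exists>n c \<rho>. c \<in> cells K n \<and> dir_cube_path n l' \<rho> \<and>
      (\<forall>t\<in>{0..l'}. (f \<circ> \<psi>) t = cell_map K n c (\<rho> t))"
    by (metis comp_apply dir_cube_path_reparam)
qed

lemma cube_piece_continuous:
  assumes "cube_piece K l f"
  shows "continuous_map (top_of_set {0..l}) (geo_top K) f"
proof -
  obtain n c \<rho> where c: "c \<in> cells K n" and \<rho>: "dir_cube_path n l \<rho>"
    and f: "\<forall>t\<in>{0..l}. f t = cell_map K n c (\<rho> t)"
    using assms unfolding cube_piece_def by blast
  have "continuous_map (top_of_set {0..l}) (top_of_set (cube n)) \<rho>"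
    using \<rho> unfolding dir_cube_path_def by auto
  from continuous_map_compose[OF this continuous_map_cell_map[OF c]]
  show ?thesis by (rule continuous_map_eq) (use f in simp)
qed

definition has_inner_coord :: "(nat \<Rightarrow> real) \<Rightarrow> bool" where
  "has_inner_coord x \<longleftrightarrow> (\<exists>i. 0 < x i \<and> x i < 1)"

lemma has_inner_coord_delta [simp]: "has_inner_coord (delta i a x) \<longleftrightarrow> has_inner_coord x"
proof
  assume "has_inner_coord (delta i a x)"
  then obtain k where k: "0 < delta i a x k" "delta i a x k < 1"
    unfolding has_inner_coord_def by blast
  consider "Suc k < i" | "Suc k = i" | "Suc k > i" by linarith
  then show "has_inner_coord x"
    by cases (use k in \<open>auto simp: has_inner_coord_def delta_def split: if_splits\<close>)
next
  assume "has_inner_coord x"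
  then obtain j where j: "0 < x j" "x j < 1" unfolding has_inner_coord_def by blast
  have "delta i a x (if Suc j < i then j else Suc j) = x j" by (simp add: delta_def)
  then show "has_inner_coord (delta i a x)" using j unfolding has_inner_coord_def by metis
qed

lemma has_inner_coord_apply_word [simp]: "has_inner_coord (apply_word w x) \<longleftrightarrow> has_inner_coord x"
  by (induction w) auto

lemma geo_rel_has_inner_coord:
  "geo_rel K p q \<Longrightarrow> has_inner_coord (snd (snd p)) \<longleftrightarrow> has_inner_coord (snd (snd q))"
  unfolding geo_rel_def by auto

lemma equivclp_geo_rel_has_inner_coord:
  "equivclp (geo_rel K) p q \<Longrightarrow> has_inner_coord (snd (snd p)) \<longleftrightarrow> has_inner_coord (snd (snd q))"
  by (induction rule: equivclp_induct) (use geo_rel_has_inner_coord in blast)+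

lemma cell_map_eq_has_inner_coord:
  assumes "c \<in> cells K n" "x \<in> cube n" "cell_map K n c x = cell_map K m d y"
  shows "has_inner_coord x \<longleftrightarrow> has_inner_coord y"
proof -
  have "(n, c, x) \<in> geo_cls K (n, c, x)"
    using assms(1,2) unfolding geo_cls_def geo_pts_def by simp
  then have "(n, c, x) \<in> geo_cls K (m, d, y)"
    using assms(3) unfolding cell_map_def by simp
  then have "equivclp (geo_rel K) (m, d, y) (n, c, x)" unfolding geo_cls_def by blast
  from equivclp_geo_rel_has_inner_coord[OF this] show ?thesis by simp
qed

lemma verts_coord: "v \<in> verts n \<Longrightarrow> v i = 0 \<or> v i = 1"
  unfolding verts_def cube_def by (cases "i < n") auto

lemma verts_not_has_inner_coord:
  assumes "v \<in> verts n"
  shows "\<not> has_inner_coord v"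
proof
  assume "has_inner_coord v"
  then obtain i where "0 < v i" "v i < 1" unfolding has_inner_coord_def by blast
  with verts_coord[OF assms, of i] show False by auto
qed

lemma verts_le_neq_coord:
  assumes "a \<in> verts n" "b \<in> verts n" "\<forall>i. a i \<le> b i" "a \<noteq> b"
  shows "\<exists>i. a i = 0 \<and> b i = 1"
proof -
  obtain i where "a i \<noteq> b i" using assms(4) by blast
  moreover have "a i \<le> b i" using assms(3) by blast
  ultimately show ?thesis
    using verts_coord[OF assms(1), of i] verts_coord[OF assms(2), of i] by auto
qed

text \<open>\<open>vertex_word v n\<close> denotes the map \<open>[0] \<rightarrow> [n]\<close> with image \<open>v\<close>.\<close>
fun vertex_word :: "(nat \<Rightarrow> real) \<Rightarrow> nat \<Rightarrow> (nat \<times> bool) list" where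
  "vertex_word v 0 = []"
| "vertex_word v (Suc k) = (Suc k, v k = 1) # vertex_word v k"

lemma length_vertex_word [simp]: "length (vertex_word v k) = k"
  by (induction k) auto

lemma valid_vertex_word: "valid_word 0 (vertex_word v k)"
  by (induction k) auto

lemma apply_vertex_word:
  "apply_word (vertex_word v k) (\<lambda>_. 0) = (\<lambda>i. if i < k \<and> v i = 1 then 1 else 0)"
proof (induction k)
  case (Suc k)
  show ?case
  proof
    fix i
    show "apply_word (vertex_word v (Suc k)) (\<lambda>_. 0) i = (if i < Suc k \<and> v i = 1 then 1 else 0)"
      using Suc by (cases "i < k"; cases "i = k") (auto simp: delta_def)
  qed
qed simp

lemma face_word_in_cells:
  assumes "precubical K"
  shows "valid_word m w \<Longrightarrow> c \<in> cells K (m + length w) \<Longrightarrow> face_word K m w c \<in> cells K m"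
proof (induction w arbitrary: c)
  case (Cons p w)
  obtain i a where p: "p = (i, a)" by fastforce
  have face: "face K n i a c \<in> cells K (n - 1)" if "c \<in> cells K n" "1 \<le> i" "i \<le> n" for n c i a
    using assms that unfolding precubical_def by blast
  have "face K (m + length w + 1) i a c \<in> cells K (m + length w)"
    using face[of c "m + length w + 1" i a] Cons.prems by (simp add: p)
  then show ?case using Cons p by simp
qed simp

lemma cell_map_eqI:
  "geo_rel K (m, d, y) (n, c, x) \<Longrightarrow> cell_map K m d y = cell_map K n c x"
  unfolding cell_map_def geo_cls_def
  by (blast intro: equivclp_trans equivclp_sym r_into_equivclp)

lemma vertex_eq_cell_map_0:
  assumes K: "precubical K" and c: "c \<in> cells K n" and v: "v \<in> verts n"
  shows "\<exists>u\<in>cells K 0. cell_map K n c v = cell_map K 0 u (\<lambda>_. 0)"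
proof -
  let ?w = "vertex_word v n"
  have v_eq: "v i = (if i < n \<and> v i = 1 then 1 else 0)" for i
    using verts_coord[OF v, of i] v unfolding verts_def cube_def by (cases "i < n") auto
  have "apply_word ?w (\<lambda>_. 0) = v"
    unfolding apply_vertex_word by (rule ext) (rule v_eq[symmetric])
  moreover have "c \<in> cells K (0 + length ?w)" and "(\<lambda>_. 0::real) \<in> cube 0"
    using c by (simp_all add: cube_def)
  ultimately have "geo_rel K (0, face_word K 0 ?w c, \<lambda>_. 0) (n, c, v)"
    unfolding geo_rel_def using valid_vertex_word by fastforce
  then have "cell_map K 0 (face_word K 0 ?w c) (\<lambda>_. 0) = cell_map K n c v" by (rule cell_map_eqI)
  moreover have "face_word K 0 ?w c \<in> cells K 0"
    using face_word_in_cells[OF K valid_vertex_word] c by simp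
  ultimately show ?thesis by (metis (no_types))
qed

section \<open>Directed paths in cubes as pieces of execution paths\<close>

definition stretch_time :: "real \<Rightarrow> real \<Rightarrow> real" where
  "stretch_time l s = min l (max 0 ((3 * s - 1) * l))"

text \<open>On \<open>[0,1/3]\<close> this moves linearly from \<open>0\<close> to \<open>r 0\<close>, on \<open>[1/3,2/3]\<close> it runs
  through \<open>r\<close> on \<open>[0,l]\<close>, and on \<open>[2/3,1]\<close> it moves linearly from \<open>r l\<close> to \<open>e\<close>.\<close>
definition extend_path :: "real \<Rightarrow> real \<Rightarrow> (real \<Rightarrow> real) \<Rightarrow> real \<Rightarrow> real" where
  "extend_path l e r s =
     min 1 (3 * s) * r (stretch_time l s) + max 0 (3 * s - 2) * (e - r (stretch_time l s))"

lemma stretch_time_range: "l \<ge> 0 \<Longrightarrow> stretch_time l s \<in> {0..l}"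
  by (simp add: stretch_time_def)

lemma stretch_time_mono: "l \<ge> 0 \<Longrightarrow> s \<le> s' \<Longrightarrow> stretch_time l s \<le> stretch_time l s'"
  unfolding stretch_time_def by (intro min.mono max.mono mult_right_mono) auto

lemma stretch_time_high:
  assumes "l \<ge> 0" "s \<ge> 2/3"
  shows "stretch_time l s = l"
proof -
  have "1 * l \<le> (3 * s - 1) * l" using assms by (intro mult_right_mono) auto
  then show ?thesis using assms(1) by (simp add: stretch_time_def)
qed

lemma extend_path_continuous:
  assumes "l \<ge> 0" "continuous_on {0..l} r"
  shows "continuous_on {0..1} (extend_path l e r)"
proof -
  have "continuous_on {0..1} (stretch_time l)"
    unfolding stretch_time_def by (intro continuous_intros)
  then have "continuous_on {0..1} (\<lambda>s. r (stretch_time l s))"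
    by (rule continuous_on_compose2[OF assms(2)]) (use stretch_time_range[OF assms(1)] in auto)
  then show ?thesis unfolding extend_path_def by (intro continuous_intros)
qed

lemma extend_path_mono:
  assumes "l \<ge> 0" "mono_on {0..l} r" "\<And>t. t \<in> {0..l} \<Longrightarrow> 0 \<le> r t \<and> r t \<le> e"
  shows "mono_on {0..1} (extend_path l e r)"
proof (rule mono_onI)
  fix s s' :: real assume s: "s \<in> {0..1}" "s' \<in> {0..1}" "s \<le> s'"
  let ?u = "\<lambda>s. r (stretch_time l s)"
  have u: "0 \<le> ?u s" "?u s \<le> ?u s'" "?u s' \<le> e"
    using assms(3)[OF stretch_time_range[OF assms(1)]] s
      mono_onD[OF assms(2) stretch_time_range[OF assms(1)] stretch_time_range[OF assms(1)]
        stretch_time_mono[OF assms(1) s(3)]]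
    by auto
  have "min 1 (3 * s) * ?u s \<le> min 1 (3 * s') * ?u s'"
    using s u by (intro mult_mono) auto
  moreover have "max 0 (3 * s - 2) * (e - ?u s) \<le> max 0 (3 * s' - 2) * (e - ?u s')"
  proof (cases "s \<le> 2/3")
    case False
    then have st: "stretch_time l s = l" "stretch_time l s' = l"
      using s(3) stretch_time_high[OF assms(1)] by auto
    show ?thesis unfolding st using s u[unfolded st] by (intro mult_right_mono) auto
  qed (use u in auto)
  ultimately show "extend_path l e r s \<le> extend_path l e r s'"
    unfolding extend_path_def by (rule add_mono)
qed

lemma extend_path_range:
  assumes "l \<ge> 0" "\<And>t. t \<in> {0..l} \<Longrightarrow> 0 \<le> r t \<and> r t \<le> e" "s \<in> {0..1}"
  shows "0 \<le> extend_path l e r s \<and> extend_path l e r s \<le> e"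
proof -
  let ?u = "r (stretch_time l s)"
  have u: "0 \<le> ?u" "?u \<le> e" using assms(2)[OF stretch_time_range[OF assms(1)]] by auto
  have "min 1 (3 * s) * ?u \<le> ?u" "max 0 (3 * s - 2) * (e - ?u) \<le> e - ?u"
    using u assms(3) by (auto intro!: mult_left_le_one_le)
  moreover have "0 \<le> min 1 (3 * s) * ?u" "0 \<le> max 0 (3 * s - 2) * (e - ?u)"
    using u assms(3) by auto
  ultimately show ?thesis unfolding extend_path_def by linarith
qed

lemma extend_path_0: "extend_path l e r 0 = 0"
  by (simp add: extend_path_def)

lemma extend_path_1: "l \<ge> 0 \<Longrightarrow> extend_path l e r 1 = e"
  by (simp add: extend_path_def stretch_time_high)

lemma extend_path_middle: "l > 0 \<Longrightarrow> t \<in> {0..l} \<Longrightarrow> extend_path l e r (1/3 + t / l / 3) = r t"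
  by (auto simp: extend_path_def stretch_time_def field_simps)

definition cube_extension :: "nat \<Rightarrow> real \<Rightarrow> (real \<Rightarrow> nat \<Rightarrow> real) \<Rightarrow> real \<Rightarrow> nat \<Rightarrow> real" where
  "cube_extension n l \<rho> =
     restrict (\<lambda>s i. extend_path l (if i < n then 1 else 0) (\<lambda>t. \<rho> t i) s) {0..1}"

lemma dir_cube_path_cube_extension:
  assumes \<rho>: "dir_cube_path n l \<rho>" and l: "l > 0"
  shows "dir_cube_path n 1 (cube_extension n l \<rho>)"
  unfolding dir_cube_path_def
proof (intro conjI allI)
  let ?e = "\<lambda>i::nat. if i < n then 1 else 0 :: real"
  have \<rho>_range: "0 \<le> \<rho> t i \<and> \<rho> t i \<le> ?e i" if "t \<in> {0..l}" for t i
  proof -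
    have "\<rho> t \<in> cube n" using \<rho> that unfolding dir_cube_path_def by blast
    then show ?thesis unfolding cube_def by (cases "i < n") auto
  qed
  have "continuous_on {0..l} (\<lambda>t. \<rho> t i)" for i
    using \<rho> unfolding dir_cube_path_def by (blast intro: continuous_on_product_then_coordinatewise)
  then have "continuous_on {0..1} (\<lambda>s i. extend_path l (?e i) (\<lambda>t. \<rho> t i) s)"
    using l by (intro continuous_on_coordinatewise_then_product extend_path_continuous) simp
  then show "continuous_on {0..1} (cube_extension n l \<rho>)"
    by (rule continuous_on_eq) (simp add: cube_extension_def)
  show "cube_extension n l \<rho> ` {0..1} \<subseteq> cube n"
  proof (clarsimp simp: cube_def)
    fix s :: real assume "0 \<le> s" "s \<le> 1"
    then have "0 \<le> cube_extension n l \<rho> s i \<and> cube_extension n l \<rho> s i \<le> ?e i" for i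
      using extend_path_range[OF _ \<rho>_range] l by (simp add: cube_extension_def)
    then show "(\<forall>i<n. 0 \<le> cube_extension n l \<rho> s i \<and> cube_extension n l \<rho> s i \<le> 1) \<and>
        (\<forall>i\<ge>n. cube_extension n l \<rho> s i = 0)"
      by (metis antisym not_le)
  qed
  fix i
  have "mono_on {0..1} (extend_path l (?e i) (\<lambda>t. \<rho> t i))"
    using \<rho> l \<rho>_range by (intro extend_path_mono) (auto simp: dir_cube_path_def)
  then show "mono_on {0..1} (\<lambda>s. cube_extension n l \<rho> s i)"
    by (simp add: cube_extension_def mono_on_def)
qed

lemma cube_extension_in_mpaths:
  assumes \<rho>: "dir_cube_path n l \<rho>" and n: "n \<ge> 1" and l: "l > 0"
  shows "cube_extension n l \<rho> \<in> mpaths (cube_mpds n)"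
proof -
  let ?e = "\<lambda>i::nat. if i < n then 1 else 0 :: real"
  have "cube_extension n l \<rho> 0 = (\<lambda>_. 0)" "cube_extension n l \<rho> 1 = ?e"
    using l by (simp_all add: cube_extension_def extend_path_0 extend_path_1 fun_eq_iff)
  moreover have "(\<lambda>_. 0) \<in> verts n" "?e \<in> verts n" "(\<lambda>_. 0) \<noteq> ?e" "\<forall>i. 0 \<le> ?e i"
    using n unfolding verts_def cube_def by (auto simp: fun_eq_iff intro!: exI[of _ 0])
  ultimately show ?thesis
    using dir_cube_path_cube_extension[OF \<rho> l] unfolding cube_mpds_def
    by (simp add: cube_extension_def)
qed

lemma cube_extension_middle:
  assumes "l > 0" "t \<in> {0..l}"
  shows "cube_extension n l \<rho> (1/3 + t / l / 3) = \<rho> t"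
proof -
  have "1/3 + t / l / 3 \<in> {0..1}" using assms by (auto simp: field_simps)
  then show ?thesis using extend_path_middle[OF assms] by (auto simp: cube_extension_def)
qed

lemma exec_piece_tame_real:
  assumes c: "c \<in> cells K n" and n: "n \<ge> 1" and \<rho>: "dir_cube_path n l \<rho>" and l: "l > 0"
  shows "exec_piece (tame_real K) l (\<lambda>t. cell_map K n c (\<rho> t))"
proof -
  let ?\<tau> = "unit_path (cell_map K n c \<circ> cube_extension n l \<rho>)"
  have \<tau>: "?\<tau> \<in> mpaths (tame_real K)"
    using tame_paths.base[OF c cube_extension_in_mpaths[OF \<rho> n l]] by (simp add: tame_real_def)
  have \<phi>: "(\<lambda>u. 1/3 + u / 3) \<in> I1"
    unfolding I1_def by (auto intro!: continuous_intros mono_onI)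
  have "cell_map K n c (\<rho> t) = ?\<tau> (1/3 + t / l / 3)" if "t \<in> {0..l}" for t
  proof -
    have "1/3 + t / l / 3 \<in> {0..1}" using that l by (auto simp: field_simps)
    then show ?thesis using cube_extension_middle[OF l that] by simp
  qed
  with \<tau> \<phi> show ?thesis
    unfolding exec_piece_def by (intro bexI[of _ ?\<tau>] bexI[of _ "\<lambda>u. 1/3 + u / 3"]) auto
qed

section \<open>The two realizations are multipointed d-spaces\<close>

lemma M11_subset_I1: "M11 \<subseteq> I1"
  unfolding M11_def I1_def by auto

lemma M11_endpoints:
  assumes "\<phi> \<in> M11"
  shows "\<phi> 0 = 0" "\<phi> 1 = 1"
proof -
  have mono: "mono_on {0..1} \<phi>" and onto: "\<phi> ` {0..1} = {0..1}"
    using assms unfolding M11_def by auto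
  have "0 \<in> \<phi> ` {0..1}" "1 \<in> \<phi> ` {0..1}" using onto by auto
  then obtain s u where s: "s \<in> {0..1}" "\<phi> s = 0" and u: "u \<in> {0..1}" "\<phi> u = 1"
    by (metis imageE)
  have "\<phi> 0 \<le> \<phi> s" "\<phi> u \<le> \<phi> 1" using mono_onD[OF mono] s(1) u(1) by auto
  moreover have "\<phi> 0 \<in> {0..1}" "\<phi> 1 \<in> {0..1}" using onto by auto
  ultimately show "\<phi> 0 = 0" "\<phi> 1 = 1" using s(2) u(2) by auto
qed

lemma tame_paths_wf:
  "\<gamma> \<in> tame_paths K \<Longrightarrow> \<gamma> \<in> extensional {0..1} \<and>
     continuous_map (top_of_set {0..1}) (geo_top K) \<gamma> \<and>
     \<gamma> 0 \<in> mstates (tame_real K) \<and> \<gamma> 1 \<in> mstates (tame_real K)"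
proof (induction rule: tame_paths.induct)
  case (base c n \<gamma>)
  then have "continuous_map (top_of_set {0..1}) (top_of_set (cube n)) \<gamma>"
    "\<gamma> 0 \<in> verts n" "\<gamma> 1 \<in> verts n"
    by (auto simp: cube_mpds_def dir_cube_path_def)
  with continuous_map_compose[OF this(1) continuous_map_cell_map[OF base(1)]] base(1)
  show ?case by (auto simp: tame_real_def)
next
  case (reparam \<gamma> \<phi>)
  have "nondecr_map 1 1 \<phi>"
    using subsetD[OF M11_subset_I1 reparam(2)] by (simp add: I1_iff_nondecr_map)
  then have "continuous_map (top_of_set {0..1}) (top_of_set {0..1}) \<phi>"
    by (rule nondecr_map_continuous_map)
  then have "continuous_map (top_of_set {0..1}) (geo_top K) (\<gamma> \<circ> \<phi>)"
    using continuous_map_compose reparam.IH by blast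
  then show ?case using reparam.IH M11_endpoints[OF reparam(2)] by simp
next
  case (comp \<gamma>1 \<gamma>2)
  then show ?case by (simp add: continuous_map_normcomp)
qed

lemma is_mpds_tame_real: "is_mpds (tame_real K)"
proof -
  have K: "mspace (tame_real K) = geo_top K" "mpaths (tame_real K) = tame_paths K"
    by (simp_all add: tame_real_def)
  have "mstates (tame_real K) \<subseteq> topspace (geo_top K)"
    using cell_map_in_geo_carrier[of _ K] by (auto simp: tame_real_def verts_def)
  then show ?thesis
    unfolding is_mpds_def K using tame_paths_wf tame_paths.reparam tame_paths.comp by blast
qed

lemma mpaths_realization: "\<gamma> \<in> mpaths (realization K) \<longleftrightarrow>
    \<gamma> \<in> geo_dipaths K \<and> \<gamma> 0 \<in> mstates (realization K) \<and> \<gamma> 1 \<in> mstates (realization K) \<and>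
    (\<exists>t\<in>{0..1}. \<gamma> t \<noteq> \<gamma> 0)"
  by (auto simp: realization_def)

lemma geo_dipaths_reparam: "\<gamma> \<in> geo_dipaths K \<Longrightarrow> \<phi> \<in> I1 \<Longrightarrow> unit_path (\<gamma> \<circ> \<phi>) \<in> geo_dipaths K"
  unfolding geo_dipaths_eq using unit_moore_path_reparam[OF reparam_closed_cube_piece] by blast

lemma geo_dipaths_normcomp:
  assumes "\<gamma>1 \<in> geo_dipaths K" "\<gamma>2 \<in> geo_dipaths K" "\<gamma>1 1 = \<gamma>2 0"
  shows "normcomp \<gamma>1 \<gamma>2 \<in> geo_dipaths K"
proof -
  obtain g1 g2 where g: "\<gamma>1 = unit_path g1" "moore_path (cube_piece K) 1 g1"
    "\<gamma>2 = unit_path g2" "moore_path (cube_piece K) 1 g2"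
    using assms(1,2) unfolding geo_dipaths_eq by blast
  have "g1 1 = g2 0" using assms(3) g by simp
  from unit_moore_path_normcomp[OF reparam_closed_cube_piece g(2,4) this]
  show ?thesis unfolding geo_dipaths_eq g(1,3) .
qed

lemma mpaths_realization_reparam:
  assumes \<gamma>: "\<gamma> \<in> mpaths (realization K)" and \<phi>: "\<phi> \<in> M11"
  shows "unit_path (\<gamma> \<circ> \<phi>) \<in> mpaths (realization K)"
proof -
  have \<gamma>': "\<gamma> \<in> geo_dipaths K" "\<gamma> 0 \<in> mstates (realization K)" "\<gamma> 1 \<in> mstates (realization K)"
    and "\<exists>t\<in>{0..1}. \<gamma> t \<noteq> \<gamma> 0"
    using \<gamma> unfolding mpaths_realization by blast+
  then obtain t where t: "t \<in> {0..1}" "\<gamma> t \<noteq> \<gamma> 0" by blast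
  have "t \<in> \<phi> ` {0..1}" using \<phi> t(1) unfolding M11_def by simp
  then obtain s where s: "s \<in> {0..1}" "\<phi> s = t" by blast
  have ends: "unit_path (\<gamma> \<circ> \<phi>) 0 = \<gamma> 0" "unit_path (\<gamma> \<circ> \<phi>) 1 = \<gamma> 1"
    using M11_endpoints[OF \<phi>] by simp_all
  have "unit_path (\<gamma> \<circ> \<phi>) s \<noteq> unit_path (\<gamma> \<circ> \<phi>) 0" using s t ends by simp
  moreover have "unit_path (\<gamma> \<circ> \<phi>) \<in> geo_dipaths K"
    using geo_dipaths_reparam[OF \<gamma>'(1)] subsetD[OF M11_subset_I1 \<phi>] .
  ultimately show ?thesis unfolding mpaths_realization ends using \<gamma>'(2,3) s(1) by blast
qed

lemma mpaths_realization_normcomp: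
  assumes \<gamma>1: "\<gamma>1 \<in> mpaths (realization K)" and \<gamma>2: "\<gamma>2 \<in> mpaths (realization K)"
    and e: "\<gamma>1 1 = \<gamma>2 0"
  shows "normcomp \<gamma>1 \<gamma>2 \<in> mpaths (realization K)"
proof -
  have \<gamma>1': "\<gamma>1 \<in> geo_dipaths K" "\<gamma>1 0 \<in> mstates (realization K)" "\<exists>t\<in>{0..1}. \<gamma>1 t \<noteq> \<gamma>1 0"
    and \<gamma>2': "\<gamma>2 \<in> geo_dipaths K" "\<gamma>2 1 \<in> mstates (realization K)"
    using \<gamma>1 \<gamma>2 unfolding mpaths_realization by blast+
  then obtain t where t: "t \<in> {0..1}" "\<gamma>1 t \<noteq> \<gamma>1 0" by blast
  then have "normcomp \<gamma>1 \<gamma>2 (t / 2) \<noteq> normcomp \<gamma>1 \<gamma>2 0" by (simp add: normcomp_eq_join)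
  moreover have "t / 2 \<in> {0..1}" using t(1) by simp
  moreover have "normcomp \<gamma>1 \<gamma>2 \<in> geo_dipaths K" using geo_dipaths_normcomp[OF \<gamma>1'(1) \<gamma>2'(1) e] .
  ultimately show ?thesis
    unfolding mpaths_realization normcomp_0 normcomp_1 using \<gamma>1'(2) \<gamma>2'(2) by blast
qed

lemma is_mpds_realization: "is_mpds (realization K)"
proof -
  have K: "mspace (realization K) = geo_top K" by (simp add: realization_def)
  have "mstates (realization K) \<subseteq> topspace (geo_top K)"
    using cell_map_in_geo_carrier[of _ K 0 "\<lambda>_. 0"] by (auto simp: realization_def cube_def)
  moreover have "\<gamma> \<in> extensional {0..1} \<and> continuous_map (top_of_set {0..1}) (geo_top K) \<gamma> \<and>
      \<gamma> 0 \<in> mstates (realization K) \<and> \<gamma> 1 \<in> mstates (realization K)"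
    if \<gamma>: "\<gamma> \<in> mpaths (realization K)" for \<gamma>
  proof -
    obtain g where g: "\<gamma> = unit_path g" "moore_path (cube_piece K) 1 g"
      using \<gamma> unfolding mpaths_realization geo_dipaths_eq by blast
    have "continuous_map (top_of_set {0..1}) (geo_top K) g"
      using moore_path_continuous[OF g(2) cube_piece_continuous] .
    then show ?thesis using \<gamma> g(1) unfolding mpaths_realization by simp
  qed
  ultimately show ?thesis
    unfolding is_mpds_def K using mpaths_realization_reparam mpaths_realization_normcomp by blast
qed

section \<open>Comparison of the two realizations\<close>

lemma cell_map_exec_path_nonconstant:
  assumes c: "c \<in> cells K n" and \<gamma>: "\<gamma> \<in> mpaths (cube_mpds n)"
  shows "\<exists>t\<in>{0..1}. cell_map K n c (\<gamma> t) \<noteq> cell_map K n c (\<gamma> 0)"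
proof -
  have dir: "dir_cube_path n 1 \<gamma>"
    and "\<exists>a\<in>verts n. \<exists>b\<in>verts n. (\<forall>i. a i \<le> b i) \<and> a \<noteq> b \<and> \<gamma> 0 = a \<and> \<gamma> 1 = b"
    using \<gamma> by (simp_all add: cube_mpds_def)
  then obtain a b where ab: "a \<in> verts n" "b \<in> verts n" "\<forall>i. a i \<le> b i" "a \<noteq> b"
    "\<gamma> 0 = a" "\<gamma> 1 = b"
    by blast
  obtain i where i: "a i = 0" "b i = 1" using verts_le_neq_coord[OF ab(1-4)] by blast
  have "continuous_on {0..1} (\<lambda>t. \<gamma> t i)"
    using dir unfolding dir_cube_path_def
    by (blast intro: continuous_on_product_then_coordinatewise)
  then obtain t where t: "0 \<le> t" "t \<le> 1" "\<gamma> t i = 1/2"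
    using IVT'[of "\<lambda>t. \<gamma> t i" 0 "1/2" 1] i ab(5,6) by auto
  have "\<gamma> t \<in> cube n"
    using dir t(1,2) unfolding dir_cube_path_def by (meson atLeastAtMost_iff image_subset_iff)
  have "cell_map K n c (\<gamma> t) \<noteq> cell_map K n c (\<gamma> 0)"
  proof
    assume "cell_map K n c (\<gamma> t) = cell_map K n c (\<gamma> 0)"
    from cell_map_eq_has_inner_coord[OF c \<open>\<gamma> t \<in> cube n\<close> this]
    have "has_inner_coord (\<gamma> t) \<longleftrightarrow> has_inner_coord a" using ab(5) by simp
    moreover have "has_inner_coord (\<gamma> t)"
      using t(3) unfolding has_inner_coord_def by (intro exI[of _ i]) simp
    ultimately show False using verts_not_has_inner_coord[OF ab(1)] by blast
  qed
  then show ?thesis using t(1,2) by (intro bexI[of _ t]) simp_all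
qed

lemma vertex_in_mstates_realization:
  assumes "precubical K" "c \<in> cells K n" "v \<in> verts n"
  shows "cell_map K n c v \<in> mstates (realization K)"
  using vertex_eq_cell_map_0[OF assms] by (auto simp: realization_def)

lemma tame_paths_subset_realization:
  assumes K: "precubical K"
  shows "tame_paths K \<subseteq> mpaths (realization K)"
proof
  fix \<gamma> assume "\<gamma> \<in> tame_paths K"
  then show "\<gamma> \<in> mpaths (realization K)"
  proof (induction rule: tame_paths.induct)
    case (base c n \<gamma>)
    let ?f = "cell_map K n c \<circ> \<gamma>"
    have \<gamma>: "dir_cube_path n 1 \<gamma>" "\<gamma> 0 \<in> verts n" "\<gamma> 1 \<in> verts n"
      using base(2) by (auto simp: cube_mpds_def)
    have "cube_piece K 1 ?f" unfolding cube_piece_def using base(1) \<gamma>(1) by auto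
    then have "moore_path (cube_piece K) 1 ?f" by (rule moore_path_single) simp
    then have "unit_path ?f \<in> geo_dipaths K" unfolding geo_dipaths_eq by blast
    moreover have "unit_path ?f 0 \<in> mstates (realization K)"
      and "unit_path ?f 1 \<in> mstates (realization K)"
      using vertex_in_mstates_realization[OF K base(1)] \<gamma>(2,3) by simp_all
    moreover have "\<exists>t\<in>{0..1}. unit_path ?f t \<noteq> unit_path ?f 0"
      using cell_map_exec_path_nonconstant[OF base] by simp
    ultimately show ?case unfolding mpaths_realization by blast
  next
    case (reparam \<gamma> \<phi>)
    show ?case by (rule mpaths_realization_reparam[OF reparam.IH reparam.hyps(2)])
  next
    case (comp \<gamma>1 \<gamma>2)
    show ?case by (rule mpaths_realization_normcomp[OF comp.IH comp.hyps(3)])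
  qed
qed

lemma mpds_map_tame_real_realization:
  assumes K: "precubical K"
  shows "mpds_map (tame_real K) (realization K) id"
proof -
  have "mstates (tame_real K) \<subseteq> mstates (realization K)"
    using vertex_in_mstates_realization[OF K] by (auto simp: tame_real_def)
  moreover have "unit_path (id \<circ> \<gamma>) \<in> mpaths (realization K)" if "\<gamma> \<in> mpaths (tame_real K)" for \<gamma>
  proof -
    have \<gamma>: "\<gamma> \<in> tame_paths K" using that by (simp add: tame_real_def)
    have "unit_path (id \<circ> \<gamma>) = \<gamma>"
      using unit_path_extensional[OF conjunct1[OF tame_paths_wf[OF \<gamma>]]] by simp
    then show ?thesis using \<gamma> tame_paths_subset_realization[OF K] by auto
  qed
  moreover have "mspace (tame_real K) = mspace (realization K)"
    by (simp add: tame_real_def realization_def)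
  ultimately show ?thesis
    unfolding mpds_map_def using is_mpds_tame_real is_mpds_realization by auto
qed

lemma exec_piece_cong: "exec_piece X l f \<Longrightarrow> (\<And>t. t \<in> {0..l} \<Longrightarrow> g t = f t) \<Longrightarrow> exec_piece X l g"
  unfolding exec_piece_def by auto

lemma cube_piece_exec_or_constant:
  assumes "cube_piece K l f" "l > 0"
  shows "exec_piece (tame_real K) l f \<or> f constant_on {0..l}"
proof -
  obtain n c \<rho> where c: "c \<in> cells K n" and \<rho>: "dir_cube_path n l \<rho>"
    and f: "\<forall>t\<in>{0..l}. f t = cell_map K n c (\<rho> t)"
    using assms(1) unfolding cube_piece_def by blast
  show ?thesis
  proof (cases "n = 0")
    case True
    have "\<rho> t = (\<lambda>_. 0)" if "t \<in> {0..l}" for t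
    proof -
      have "\<rho> t \<in> cube n" using \<rho> that unfolding dir_cube_path_def by blast
      then show ?thesis using True by (auto simp: cube_def fun_eq_iff)
    qed
    then have "f t = cell_map K n c (\<lambda>_. 0)" if "t \<in> {0..l}" for t using f that by simp
    then show ?thesis unfolding constant_on_def by blast
  next
    case False
    then have "exec_piece (tame_real K) l (\<lambda>t. cell_map K n c (\<rho> t))"
      by (intro exec_piece_tame_real[OF c _ \<rho> assms(2)]) simp
    then show ?thesis using exec_piece_cong f by blast
  qed
qed

lemma mpaths_realization_moore_tame:
  assumes \<gamma>: "\<gamma> \<in> mpaths (realization K)"
  shows "moore_path (exec_piece (tame_real K)) 1 \<gamma>"
proof -
  let ?P = "exec_piece (tame_real K)"
  have "\<gamma> \<in> geo_dipaths K" and nonconst: "\<exists>t\<in>{0..1}. \<gamma> t \<noteq> \<gamma> 0"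
    using \<gamma> unfolding mpaths_realization by blast+
  then obtain g where g: "\<gamma> = unit_path g" "moore_path (cube_piece K) 1 g"
    unfolding geo_dipaths_eq by blast
  then obtain ps where ps: "moore_chain (cube_piece K) ps" "chain_length ps = 1"
    "\<forall>t\<in>{0..1}. moore ps t = g t"
    unfolding moore_path_def by blast
  have ps_\<gamma>: "moore ps t = \<gamma> t" if "t \<in> {0..1}" for t using ps(3) g(1) that by simp
  have chain: "moore_chain (\<lambda>l f. ?P l f \<or> f constant_on {0..l}) ps"
    by (rule moore_chain_mono[OF ps(1)]) (rule cube_piece_exec_or_constant)
  have "\<exists>(l, f)\<in>set ps. ?P l f"
  proof (rule ccontr)
    assume none: "\<not> (\<exists>(l, f)\<in>set ps. ?P l f)"
    have "moore_chain (\<lambda>l f. f constant_on {0..l}) ps"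
    proof (rule moore_chain_mono[OF chain])
      fix l f assume "(l, f) \<in> set ps" "?P l f \<or> f constant_on {0..l}"
      with none show "f constant_on {0..l}" by auto
    qed
    from moore_chain_constant[OF this] obtain y where y: "\<forall>t\<in>{0..1}. moore ps t = y"
      unfolding ps(2) constant_on_def by blast
    have "\<gamma> t = \<gamma> 0" if "t \<in> {0..1}" for t
      using y ps_\<gamma>[OF that] ps_\<gamma>[of 0] that by simp
    then show False using nonconst by blast
  qed
  from moore_path_absorb_constant[OF reparam_closed_exec_piece chain this]
  have "moore_path ?P 1 (moore ps)" using ps(2) by simp
  then show ?thesis by (rule moore_path_cong) (simp add: ps_\<gamma>)
qed

lemma exec_piece_realization_moore_tame:
  assumes "exec_piece (realization K) l f" "l > 0"
  shows "moore_path (exec_piece (tame_real K)) l f"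
proof -
  obtain \<gamma> \<phi> where \<gamma>: "\<gamma> \<in> mpaths (realization K)" "\<phi> \<in> I1" "\<forall>t\<in>{0..l}. f t = \<gamma> (\<phi> (t / l))"
    using assms(1) unfolding exec_piece_def by blast
  have "nondecr_map l 1 (\<phi> \<circ> (\<lambda>t. t / l))"
    using nondecr_map_divide[OF assms(2)] \<gamma>(2) unfolding I1_iff_nondecr_map
    by (rule nondecr_map_comp)
  from moore_path_reparam[OF reparam_closed_exec_piece mpaths_realization_moore_tame[OF \<gamma>(1)]
      assms(2) this]
  show ?thesis by (rule moore_path_cong) (use \<gamma>(3) in simp)
qed

lemma moore_path_exec_tame_iff_realization:
  assumes K: "precubical K"
  shows "moore_path (exec_piece (tame_real K)) L g \<longleftrightarrow> moore_path (exec_piece (realization K)) L g"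
proof
  assume "moore_path (exec_piece (tame_real K)) L g"
  moreover have "mpaths (tame_real K) \<subseteq> mpaths (realization K)"
    using tame_paths_subset_realization[OF K] by (simp add: tame_real_def)
  then have "exec_piece (tame_real K) l f \<Longrightarrow> exec_piece (realization K) l f" for l f
    unfolding exec_piece_def by blast
  ultimately show "moore_path (exec_piece (realization K)) L g" using moore_path_mono by blast
next
  assume "moore_path (exec_piece (realization K)) L g"
  then have "moore_path (moore_path (exec_piece (tame_real K))) L g"
    using exec_piece_realization_moore_tame moore_path_mono by blast
  then show "moore_path (exec_piece (tame_real K)) L g" by (rule moore_path_flatten)
qed

lemma Sp_tame_real_eq_Sp_realization:
  assumes "precubical K"
  shows "Sp (tame_real K) = Sp (realization K)"
proof (rule dspace.equality)
  have "mspace (tame_real K) = mspace (realization K)" by (simp add: tame_real_def realization_def)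
  then show "dtop (Sp (tame_real K)) = dtop (Sp (realization K))"
    and "dpaths (Sp (tame_real K)) = dpaths (Sp (realization K))"
    unfolding dpaths_Sp moore_path_exec_tame_iff_realization[OF assms] by simp_all
qed (simp add: Sp_def)

lemma dspace_iso_id:
  assumes "is_dspace A"
  shows "dspace_iso A A id"
proof -
  have "unit_path (id \<circ> \<gamma>) = \<gamma>" if "\<gamma> \<in> dpaths A" for \<gamma>
    using assms that unfolding is_dspace_def by (simp add: unit_path_extensional)
  then show ?thesis
    unfolding dspace_iso_def using assms homeomorphic_maps_id[of "dtop A" "dtop A"] by auto
qed

theorem proposition3p10:
  fixes K :: "'a precub"
  assumes "precubical K"
  shows "mpds_map (tame_real K) (realization K) id \<and>
         dspace_iso (Sp (tame_real K)) (Sp (realization K)) id"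
  using mpds_map_tame_real_realization[OF assms] Sp_tame_real_eq_Sp_realization[OF assms]
    dspace_iso_id[OF is_dspace_Sp[OF is_mpds_tame_real[of K]]]
  by simp

end
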